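(* Let $k\geq 2$ and let $G$ be a graph of order $n\geq 8k^2-3k$ that does not contain $k\cdot P_3$ as a subgraph. Then $\rho(G)\leq \rho(F_{n,k})$, with equality if and only if $G=F_{n,k}$.
   Context: Graphs are finite and simple; $\rho(G)$ is the largest eigenvalue of the adjacency matrix of $G$. $P_3$ is the path on 3 vertices and $k\cdot P_3$ is the disjoint union of $k$ copies of $P_3$. $G\vee H$ is the join and $G\cup H$ the disjoint union of vertex-disjoint graphs; $pK_2$ is the disjoint union of $p$ edges. Writing $n-(k-1)=2p+s$ with integers $p\geq 0$ and $0\leq s<2$, $F_{n,k}=K_{k-1}\vee(pK_2\cup K_s)$. *)

theory Defs
  imports Complex_Main
begin

definition simple_graph :: "'a set \<Rightarrow> 'a set set \<Rightarrow> bool" where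
  "simple_graph V E \<longleftrightarrow> finite V \<and> (\<forall>e\<in>E. e \<subseteq> V \<and> card e = 2)"

definition adj :: "'a set set \<Rightarrow> 'a \<Rightarrow> 'a \<Rightarrow> real" where
  "adj E u v = (if {u, v} \<in> E then 1 else 0)"

text \<open>Real eigenvalues of the adjacency matrix (indexed by V).
  The adjacency matrix is real symmetric, so all its eigenvalues are real.\<close>
definition adj_eigenvalues :: "'a set \<Rightarrow> 'a set set \<Rightarrow> real set" where
  "adj_eigenvalues V E =
     {mu. \<exists>x :: 'a \<Rightarrow> real. (\<exists>v\<in>V. x v \<noteq> 0) \<and>
          (\<forall>v\<in>V. (\<Sum>u\<in>V. adj E v u * x u) = mu * x v)}"

definition spectral_radius :: "'a set \<Rightarrow> 'a set set \<Rightarrow> real" where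
  "spectral_radius V E = Max (adj_eigenvalues V E)"

definition contains_subgraph ::
  "'a set \<Rightarrow> 'a set set \<Rightarrow> 'b set \<Rightarrow> 'b set set \<Rightarrow> bool" where
  "contains_subgraph V E VH EH \<longleftrightarrow>
     (\<exists>f. inj_on f VH \<and> f ` VH \<subseteq> V \<and> (\<forall>e\<in>EH. f ` e \<in> E))"

definition graph_iso ::
  "'a set \<Rightarrow> 'a set set \<Rightarrow> 'b set \<Rightarrow> 'b set set \<Rightarrow> bool" where
  "graph_iso V E W F \<longleftrightarrow>
     (\<exists>f. bij_betw f V W \<and> (\<forall>u\<in>V. \<forall>v\<in>V. {u, v} \<in> E \<longleftrightarrow> {f u, f v} \<in> F))"

definition kP3_verts :: "nat \<Rightarrow> (nat \<times> nat) set" where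
  "kP3_verts k = {0..<k} \<times> {0, 1, 2}"

definition kP3_edges :: "nat \<Rightarrow> (nat \<times> nat) set set" where
  "kP3_edges k = (\<Union>i\<in>{0..<k}. {{(i, 0), (i, 1)}, {(i, 1), (i, 2)}})"

text \<open>F_{n,k} = K_{k-1} join (p K_2 union K_s), where n-(k-1) = 2p+s, 0<=s<2.
  Vertex set {0..<n}; vertices 0..k-2 form K_{k-1}; the remaining vertices
  k-1+2j, k-1+2j+1 (j<p) form the p edges; if s = 1 vertex n-1 is the extra
  isolated vertex of the second part.\<close>
definition F_verts :: "nat \<Rightarrow> nat set" where
  "F_verts n = {0..<n}"

definition F_edges :: "nat \<Rightarrow> nat \<Rightarrow> nat set set" where
  "F_edges n k = {{u, v} | u v. u < n \<and> v < n \<and> u \<noteq> v \<and>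
      (u < k - 1 \<or> v < k - 1 \<or>
       (u - (k - 1)) div 2 = (v - (k - 1)) div 2)}"

end

theory Submission
  imports Defs "HOL-Analysis.Analysis"
begin

text \<open>Let L be the set of vertices of degree at least 3 k - 1. Since such vertices can be
  greedily made centres of disjoint paths P_3, |L| < k and G - L contains no (k - |L|) P_3.

  If |L| = k - 1, then G - L is a matching, so G is a spanning subgraph of a copy of F_{n,k}.
  This copy has a dominating vertex, hence a positive Perron vector, and so rho(G) <= rho(F_{n,k})
  with equality only if G is the whole copy.

  If |L| <= k - 2, the Perron vector x of G attains its maximum at a vertex v0 of L, as otherwise
  rho(G) <= 3 k - 2. Vertices outside L have small entries, and G - L has only O(n) edges because
  a maximal family of disjoint paths P_3 in it has fewer than k members. Counting walks of
  length two from v0 then gives rho(G)^2 <= (|L| - 1) rho(G) + |L| (n - |L|) + n - 2 k + 3,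
  whereas testing F_{n,k} with a vector that is constant on its clique K_{k-1} and on the
  remaining vertices shows rho(F_{n,k})^2 - (k - 2) rho(F_{n,k}) >= (k - 1)(n - k + 1).
  For n >= 8 k^2 - 3 k these force rho(G) < rho(F_{n,k}).\<close>

section \<open>Rayleigh quotients of symmetric matrices\<close>

definition quad_form :: "'a set \<Rightarrow> ('a \<Rightarrow> 'a \<Rightarrow> real) \<Rightarrow> ('a \<Rightarrow> real) \<Rightarrow> real" where
  "quad_form V a x = (\<Sum>u\<in>V. \<Sum>v\<in>V. a u v * x u * x v)"

definition sq_norm :: "'a set \<Rightarrow> ('a \<Rightarrow> real) \<Rightarrow> real" where
  "sq_norm V x = (\<Sum>v\<in>V. (x v)^2)"

definition symmetric_on :: "'a set \<Rightarrow> ('a \<Rightarrow> 'a \<Rightarrow> real) \<Rightarrow> bool" where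
  "symmetric_on V a \<longleftrightarrow> (\<forall>u\<in>V. \<forall>v\<in>V. a u v = a v u)"

abbreviation eigen_equation :: "'a set \<Rightarrow> ('a \<Rightarrow> 'a \<Rightarrow> real) \<Rightarrow> real \<Rightarrow> ('a \<Rightarrow> real) \<Rightarrow> bool" where
  "eigen_equation V a mu x \<equiv> \<forall>v\<in>V. (\<Sum>u\<in>V. a v u * x u) = mu * x v"

lemma quad_form_restrict: "quad_form V a (restrict x V) = quad_form V a x"
  unfolding quad_form_def by (intro sum.cong refl) auto

lemma sq_norm_restrict: "sq_norm V (restrict x V) = sq_norm V x"
  unfolding sq_norm_def by (intro sum.cong refl) auto

lemma sq_norm_nonneg: "sq_norm V x \<ge> 0"
  unfolding sq_norm_def by (simp add: sum_nonneg)

lemma sq_norm_eq_0_iff: "finite V \<Longrightarrow> sq_norm V x = 0 \<longleftrightarrow> (\<forall>v\<in>V. x v = 0)"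
  unfolding sq_norm_def by (subst sum_nonneg_eq_0_iff) auto

lemma sq_norm_pos: "finite V \<Longrightarrow> v \<in> V \<Longrightarrow> x v \<noteq> 0 \<Longrightarrow> sq_norm V x > 0"
  using sq_norm_eq_0_iff sq_norm_nonneg by (metis less_eq_real_def)

lemma quad_form_scale: "quad_form V a (\<lambda>v. c * x v) = c^2 * quad_form V a x"
  unfolding quad_form_def by (simp add: sum_distrib_left power2_eq_square algebra_simps)

lemma sq_norm_scale: "sq_norm V (\<lambda>v. c * x v) = c^2 * sq_norm V x"
  unfolding sq_norm_def by (simp add: sum_distrib_left power2_eq_square algebra_simps)

lemma quad_form_add:
  assumes "symmetric_on V a"
  shows "quad_form V a (\<lambda>v. x v + t * y v) =
    quad_form V a x + 2 * t * (\<Sum>v\<in>V. y v * (\<Sum>u\<in>V. a v u * x u)) + t^2 * quad_form V a y"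
proof -
  have cross1: "(\<Sum>u\<in>V. \<Sum>v\<in>V. a u v * x u * y v) = (\<Sum>v\<in>V. y v * (\<Sum>u\<in>V. a v u * x u))"
    apply (subst sum.swap)
    apply (simp add: sum_distrib_left)
    apply (intro sum.cong refl)
    using assms unfolding symmetric_on_def by (auto simp: algebra_simps)
  have cross2: "(\<Sum>u\<in>V. \<Sum>v\<in>V. a u v * y u * x v) = (\<Sum>v\<in>V. y v * (\<Sum>u\<in>V. a v u * x u))"
    by (simp add: sum_distrib_left algebra_simps)
  have "quad_form V a (\<lambda>v. x v + t * y v) = (\<Sum>u\<in>V. \<Sum>v\<in>V. a u v * x u * x v
      + t * (a u v * x u * y v) + t * (a u v * y u * x v) + t^2 * (a u v * y u * y v))"
    unfolding quad_form_def by (intro sum.cong refl) (simp add: algebra_simps power2_eq_square)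
  also have "\<dots> = quad_form V a x + t * (\<Sum>u\<in>V. \<Sum>v\<in>V. a u v * x u * y v)
      + t * (\<Sum>u\<in>V. \<Sum>v\<in>V. a u v * y u * x v) + t^2 * quad_form V a y"
    unfolding quad_form_def by (simp add: sum.distrib sum_distrib_left)
  finally show ?thesis using cross1 cross2 by simp
qed

lemma sq_norm_add:
  "sq_norm V (\<lambda>v. x v + t * y v) = sq_norm V x + 2 * t * (\<Sum>v\<in>V. y v * x v) + t^2 * sq_norm V y"
proof -
  have "sq_norm V (\<lambda>v. x v + t * y v) = (\<Sum>v\<in>V. (x v)^2 + 2 * t * (y v * x v) + t^2 * (y v)^2)"
    unfolding sq_norm_def by (intro sum.cong refl) (simp add: algebra_simps power2_eq_square)
  then show ?thesis unfolding sq_norm_def by (simp add: sum.distrib sum_distrib_left)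
qed

lemma quad_form_eigenvector:
  assumes "eigen_equation V a mu x"
  shows "quad_form V a x = mu * sq_norm V x"
proof -
  have "quad_form V a x = (\<Sum>u\<in>V. x u * (\<Sum>v\<in>V. a u v * x v))"
    unfolding quad_form_def by (simp add: sum_distrib_left algebra_simps)
  also have "\<dots> = (\<Sum>u\<in>V. x u * (mu * x u))" using assms by simp
  finally show ?thesis unfolding sq_norm_def by (simp add: sum_distrib_left power2_eq_square algebra_simps)
qed

lemma quad_form_attains_max_on_sphere:
  assumes "finite V" "V \<noteq> {}"
  obtains x where "sq_norm V x = 1" "\<And>y. sq_norm V y = 1 \<Longrightarrow> quad_form V a y \<le> quad_form V a x"
proof -
  let ?X = "product_topology (\<lambda>_. euclideanreal) V"
  let ?C = "{x \<in> topspace ?X. sq_norm V x \<in> {1}}"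
  have cont_quad: "continuous_map ?X euclideanreal (quad_form V a)"
    unfolding quad_form_def
    by (intro continuous_map_sum assms continuous_map_real_mult continuous_map_const[THEN iffD2]
          continuous_map_product_projection) auto
  have cont_norm: "continuous_map ?X euclideanreal (sq_norm V)"
    unfolding sq_norm_def power2_eq_square
    by (intro continuous_map_sum assms continuous_map_real_mult continuous_map_product_projection) auto
  have sphere_in_cube: "?C \<subseteq> PiE V (\<lambda>_. {-1..1})"
  proof
    fix x assume x: "x \<in> ?C"
    have "\<bar>x v\<bar> \<le> 1" if "v \<in> V" for v
    proof -
      have "(x v)^2 \<le> sq_norm V x"
        unfolding sq_norm_def using that assms(1) by (intro member_le_sum) auto
      then have "(x v)^2 \<le> 1^2" using x by simp
      then show ?thesis using abs_le_square_iff by (metis abs_one)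
    qed
    then show "x \<in> PiE V (\<lambda>_. {-1..1})" using x by (auto simp: PiE_iff abs_le_iff)
  qed
  have "compactin ?X ?C"
    by (rule closed_compactin[OF _ sphere_in_cube closedin_continuous_map_preimage[OF cont_norm]])
      (auto simp: compactin_PiE)
  then have "compactin euclideanreal (quad_form V a ` ?C)" by (rule image_compactin[OF _ cont_quad])
  then have cmp: "compact (quad_form V a ` ?C)" by simp
  obtain w where w: "w \<in> V" using assms by auto
  have "(\<Sum>v\<in>V. (if v = w then 1 else 0::real)^2) = (\<Sum>v\<in>V. if v = w then 1 else 0)"
    by (rule sum.cong) auto
  then have "sq_norm V (restrict (\<lambda>v. if v = w then 1 else 0) V) = 1"
    unfolding sq_norm_restrict unfolding sq_norm_def using assms w by simp
  then have "restrict (\<lambda>v. if v = w then 1 else 0) V \<in> ?C" by auto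
  then have "quad_form V a ` ?C \<noteq> {}" by blast
  then obtain x where x: "x \<in> ?C" "\<forall>z\<in>?C. quad_form V a z \<le> quad_form V a x"
    using compact_attains_sup[OF cmp] by auto
  show ?thesis
  proof
    show "sq_norm V x = 1" using x by auto
    fix y assume "sq_norm V y = 1"
    then have "restrict y V \<in> ?C" by (auto simp: sq_norm_restrict)
    then have "quad_form V a (restrict y V) \<le> quad_form V a x" using x(2) by blast
    then show "quad_form V a y \<le> quad_form V a x" by (simp add: quad_form_restrict)
  qed
qed

lemma quad_form_le_max_mult_sq_norm:
  assumes "finite V" "sq_norm V x = 1" "\<And>z. sq_norm V z = 1 \<Longrightarrow> quad_form V a z \<le> quad_form V a x"
  shows "quad_form V a y \<le> quad_form V a x * sq_norm V y"
proof (cases "sq_norm V y = 0")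
  case True
  then have "quad_form V a y = 0" using assms(1) by (simp add: sq_norm_eq_0_iff quad_form_def)
  then show ?thesis using True by simp
next
  case False
  then have pos: "sq_norm V y > 0" using sq_norm_nonneg[of V y] by simp
  define c where "c = 1 / sqrt (sq_norm V y)"
  have c2: "c^2 = 1 / sq_norm V y" unfolding c_def using pos by (simp add: power_divide)
  have "sq_norm V (\<lambda>v. c * y v) = 1" unfolding sq_norm_scale c2 using pos by simp
  then have "quad_form V a (\<lambda>v. c * y v) \<le> quad_form V a x" using assms(3) by blast
  then show ?thesis unfolding quad_form_scale c2 using pos by (simp add: divide_simps mult.commute)
qed

lemma linear_coeff_eq_0_if_quadratic_nonneg:
  fixes c d :: real
  assumes "\<And>t. c * t + d * t^2 \<ge> 0"
  shows "c = 0"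
proof (rule ccontr)
  assume c: "c \<noteq> 0"
  define s where "s = 1 / (\<bar>d\<bar> + 1)"
  have s0: "s > 0" unfolding s_def by (simp add: add_pos_nonneg)
  have "c * (- c * s) + d * (- c * s)^2 \<ge> 0" using assms by blast
  then have "c^2 * s * (d * s - 1) \<ge> 0" by (simp add: algebra_simps power2_eq_square)
  moreover have "c^2 * s > 0" using c s0 by simp
  ultimately have "d * s - 1 \<ge> 0" using zero_le_mult_iff by (metis not_le)
  moreover have "d * s < 1" unfolding s_def by (cases "d \<ge> 0") (auto simp: divide_simps)
  ultimately show False by simp
qed

text \<open>Perturbing a maximiser x of the Rayleigh quotient by t times a unit vector at w gives a
  quadratic in t that is nonnegative and vanishes at t = 0; its linear coefficient is the defect
  of the eigen-equation at w.\<close>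

lemma eigenvector_if_maximises_Rayleigh:
  assumes sym: "symmetric_on V a" and fin: "finite V"
    and le: "\<And>y. quad_form V a y \<le> lam * sq_norm V y"
    and x: "sq_norm V x = 1" "quad_form V a x = lam"
  shows "eigen_equation V a lam x"
proof
  fix w assume w: "w \<in> V"
  define y where "y = (\<lambda>v. if v = w then 1 else (0::real))"
  have pick: "(\<Sum>v\<in>V. y v * F v) = F w" for F :: "'a \<Rightarrow> real"
  proof -
    have "(\<Sum>v\<in>V. y v * F v) = (\<Sum>v\<in>V. if v = w then F v else 0)"
      by (rule sum.cong) (auto simp: y_def)
    then show ?thesis using fin w by simp
  qed
  have "(2 * (lam * x w - (\<Sum>u\<in>V. a w u * x u))) * t + (lam * sq_norm V y - quad_form V a y) * t^2 \<ge> 0"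
    for t
    using le[of "\<lambda>v. x v + t * y v"]
    unfolding quad_form_add[OF sym] sq_norm_add pick x by (simp add: algebra_simps)
  from linear_coeff_eq_0_if_quadratic_nonneg[OF this]
  show "(\<Sum>u\<in>V. a w u * x u) = lam * x w" by simp
qed

definition lin_indep_on :: "'i set \<Rightarrow> 'a set \<Rightarrow> ('i \<Rightarrow> 'a \<Rightarrow> real) \<Rightarrow> bool" where
  "lin_indep_on I V g \<longleftrightarrow> (\<forall>c. (\<forall>v\<in>V. (\<Sum>i\<in>I. c i * g i v) = 0) \<longrightarrow> (\<forall>i\<in>I. c i = 0))"

lemma lin_indep_on_eliminate:
  assumes indep: "lin_indep_on I (insert w F) g" and fin: "finite I"
    and j: "j \<in> I" "g j w \<noteq> 0"
  shows "lin_indep_on (I - {j}) F (\<lambda>i v. g i v - (g i w / g j w) * g j v)"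
  unfolding lin_indep_on_def
proof (intro allI impI)
  fix c assume h: "\<forall>v\<in>F. (\<Sum>i\<in>I - {j}. c i * (g i v - (g i w / g j w) * g j v)) = 0"
  define c' where "c' i = (if i = j then - (\<Sum>i\<in>I - {j}. c i * g i w) / g j w else c i)" for i
  have eq: "(\<Sum>i\<in>I. c' i * g i v) = (\<Sum>i\<in>I - {j}. c i * (g i v - (g i w / g j w) * g j v))" for v
  proof -
    have "(\<Sum>i\<in>I. c' i * g i v) = c' j * g j v + (\<Sum>i\<in>I - {j}. c i * g i v)"
      using j fin by (simp add: sum.remove c'_def)
    moreover have "(\<Sum>i\<in>I - {j}. c i * (g i v - (g i w / g j w) * g j v))
        = (\<Sum>i\<in>I - {j}. c i * g i v) - (\<Sum>i\<in>I - {j}. c i * g i w) * (g j v / g j w)"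
    proof -
      have "(\<Sum>i\<in>I - {j}. c i * (g i v - (g i w / g j w) * g j v))
          = (\<Sum>i\<in>I - {j}. c i * g i v - (c i * g i w) * (g j v / g j w))"
        by (rule sum.cong) (auto simp: algebra_simps)
      then show ?thesis by (simp add: sum_subtractf sum_distrib_right del: times_divide_eq_right)
    qed
    ultimately show ?thesis by (simp add: c'_def)
  qed
  have "\<forall>v\<in>insert w F. (\<Sum>i\<in>I. c' i * g i v) = 0" using h j(2) by (auto simp: eq)
  then have "\<forall>i\<in>I. c' i = 0" using indep unfolding lin_indep_on_def by blast
  then show "\<forall>i\<in>I - {j}. c i = 0" unfolding c'_def by (metis DiffE singletonI)
qed

lemma card_le_if_lin_indep_on:
  assumes "finite V" "finite I" "lin_indep_on I V g"
  shows "card I \<le> card V"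
  using assms
proof (induction V arbitrary: I g rule: finite_induct)
  case empty
  then have "I = {}"
    unfolding lin_indep_on_def by (drule_tac x="\<lambda>_. 1::real" in spec) auto
  then show ?case by simp
next
  case (insert w F)
  show ?case
  proof (cases "\<forall>i\<in>I. g i w = 0")
    case True
    then have "lin_indep_on I F g"
      using insert.prems(2) unfolding lin_indep_on_def by auto
    then have "card I \<le> card F" using insert.IH insert.prems(1) by blast
    then show ?thesis using insert.hyps by simp
  next
    case False
    then obtain j where j: "j \<in> I" "g j w \<noteq> 0" by blast
    then have "card (I - {j}) \<le> card F"
      using insert.IH lin_indep_on_eliminate[OF insert.prems(2,1) j] insert.prems(1) by blast
    then show ?thesis using insert.hyps insert.prems(1) j by (simp add: card_Diff_singleton)
  qed
qed

lemma eigenvectors_orthogonal: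
  assumes sym: "symmetric_on V a"
    and "eigen_equation V a mu x" "eigen_equation V a nu y" "mu \<noteq> nu"
  shows "(\<Sum>v\<in>V. x v * y v) = 0"
proof -
  have "mu * (\<Sum>v\<in>V. x v * y v) = (\<Sum>v\<in>V. (\<Sum>u\<in>V. a v u * x u) * y v)"
    using assms(2) by (simp add: sum_distrib_left algebra_simps)
  also have "\<dots> = (\<Sum>v\<in>V. \<Sum>u\<in>V. a v u * x u * y v)" by (simp add: sum_distrib_right)
  also have "\<dots> = (\<Sum>u\<in>V. \<Sum>v\<in>V. a v u * x u * y v)" by (rule sum.swap)
  also have "\<dots> = (\<Sum>u\<in>V. x u * (\<Sum>v\<in>V. a u v * y v))"
    using sym unfolding symmetric_on_def by (simp add: sum_distrib_left algebra_simps)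
  also have "\<dots> = nu * (\<Sum>v\<in>V. x v * y v)"
    using assms(3) by (simp add: sum_distrib_left algebra_simps)
  finally show ?thesis using assms(4) by simp
qed

lemma finite_eigenvalues:
  assumes fin: "finite V" and sym: "symmetric_on V a"
  shows "finite {mu. \<exists>x. (\<exists>v\<in>V. x v \<noteq> 0) \<and> eigen_equation V a mu x}"
    (is "finite ?Eig")
proof (rule ccontr)
  assume "infinite ?Eig"
  then obtain S where S: "S \<subseteq> ?Eig" "finite S" "card S = Suc (card V)"
    using infinite_arbitrarily_large by blast
  then have "\<forall>mu\<in>S. \<exists>x. (\<exists>v\<in>V. x v \<noteq> 0) \<and> eigen_equation V a mu x" by blast
  then obtain g where g: "\<And>mu. mu \<in> S \<Longrightarrow> (\<exists>v\<in>V. g mu v \<noteq> 0) \<and> eigen_equation V a mu (g mu)"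
    by metis
  have "lin_indep_on S V g" unfolding lin_indep_on_def
  proof (intro allI impI ballI)
    fix c nu assume h: "\<forall>v\<in>V. (\<Sum>mu\<in>S. c mu * g mu v) = 0" and nu: "nu \<in> S"
    have "0 = (\<Sum>v\<in>V. (\<Sum>mu\<in>S. c mu * g mu v) * g nu v)" using h by simp
    also have "\<dots> = (\<Sum>mu\<in>S. c mu * (\<Sum>v\<in>V. g mu v * g nu v))"
      by (simp add: sum_distrib_right sum_distrib_left sum.swap[of _ V] algebra_simps)
    also have "\<dots> = (\<Sum>mu\<in>S. if mu = nu then c nu * sq_norm V (g nu) else 0)"
      using eigenvectors_orthogonal[OF sym conjunct2[OF g] conjunct2[OF g[OF nu]]]
      by (intro sum.cong) (auto simp: sq_norm_def power2_eq_square)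
    also have "\<dots> = c nu * sq_norm V (g nu)" using S(2) nu by simp
    finally have "c nu * sq_norm V (g nu) = 0" by simp
    moreover have "sq_norm V (g nu) > 0" using g[OF nu] sq_norm_pos[OF fin] by blast
    ultimately show "c nu = 0" by simp
  qed
  then have "card S \<le> card V" using card_le_if_lin_indep_on fin S(2) by blast
  then show False using S(3) by simp
qed

section \<open>Spectral radius of a graph\<close>

lemma symmetric_on_adj: "symmetric_on V (adj E)"
  unfolding symmetric_on_def adj_def by (simp add: insert_commute)

lemma adj_nonneg: "adj E u v \<ge> 0"
  unfolding adj_def by simp

lemma adj_mono: "E \<subseteq> E' \<Longrightarrow> adj E u v \<le> adj E' u v"
  unfolding adj_def by auto

lemma quad_form_le_quad_form_abs:
  assumes "\<And>u v. a u v \<ge> 0"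
  shows "quad_form V a x \<le> quad_form V a (\<lambda>v. \<bar>x v\<bar>)"
  unfolding quad_form_def
proof (intro sum_mono)
  fix u v
  have "x u * x v \<le> \<bar>x u\<bar> * \<bar>x v\<bar>" by (metis abs_ge_self abs_mult)
  then show "a u v * x u * x v \<le> a u v * \<bar>x u\<bar> * \<bar>x v\<bar>"
    using assms mult_left_mono by (metis mult.assoc)
qed

text \<open>Replacing a maximiser of the Rayleigh quotient by its absolute values keeps it a maximiser,
  since adj is nonnegative; so the maximum is an eigenvalue with a nonnegative eigenvector.\<close>

lemma Perron_vector:
  assumes fin: "finite V" and ne: "V \<noteq> {}"
  obtains x where "\<And>v. x v \<ge> 0" "sq_norm V x = 1" "eigen_equation V (adj E) (spectral_radius V E) x"
    "\<And>y. quad_form V (adj E) y \<le> spectral_radius V E * sq_norm V y"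
proof -
  obtain x where x: "sq_norm V x = 1"
    "\<And>y. sq_norm V y = 1 \<Longrightarrow> quad_form V (adj E) y \<le> quad_form V (adj E) x"
    using quad_form_attains_max_on_sphere[OF fin ne] by blast
  define lam where "lam = quad_form V (adj E) x"
  have le: "quad_form V (adj E) y \<le> lam * sq_norm V y" for y
    unfolding lam_def by (rule quad_form_le_max_mult_sq_norm[OF fin x])
  define x' where "x' = (\<lambda>v. \<bar>x v\<bar>)"
  have norm': "sq_norm V x' = 1" using x unfolding x'_def sq_norm_def by simp
  have "quad_form V (adj E) x \<le> quad_form V (adj E) x'"
    unfolding x'_def by (rule quad_form_le_quad_form_abs) (simp add: adj_nonneg)
  moreover have "quad_form V (adj E) x' \<le> lam" using le[of x'] norm' by simp
  ultimately have "quad_form V (adj E) x' = lam" unfolding lam_def by simp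
  then have ev: "eigen_equation V (adj E) lam x'"
    by (rule eigenvector_if_maximises_Rayleigh[OF symmetric_on_adj fin le norm'])
  obtain v where "v \<in> V" "x' v \<noteq> 0" using norm' sq_norm_eq_0_iff[OF fin, of x'] by auto
  then have lam_in: "lam \<in> adj_eigenvalues V E" unfolding adj_eigenvalues_def using ev by blast
  have lam_max: "mu \<le> lam" if mu: "mu \<in> adj_eigenvalues V E" for mu
  proof -
    obtain y v where y: "v \<in> V" "y v \<noteq> 0" "eigen_equation V (adj E) mu y"
      using mu unfolding adj_eigenvalues_def by blast
    have "mu * sq_norm V y \<le> lam * sq_norm V y"
      using le[of y] quad_form_eigenvector[OF y(3)] by simp
    moreover have "sq_norm V y > 0" using sq_norm_pos[OF fin y(1), of y] y(2) by blast
    ultimately show ?thesis by simp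
  qed
  have "finite (adj_eigenvalues V E)"
    using finite_eigenvalues[OF fin symmetric_on_adj] unfolding adj_eigenvalues_def .
  then have "spectral_radius V E = lam"
    unfolding spectral_radius_def using lam_in lam_max by (intro Max_eqI) auto
  then show ?thesis using that[of x'] ev norm' le by (simp add: x'_def)
qed

lemma quad_form_adj_le_spectral_radius:
  assumes "finite V" "V \<noteq> {}"
  shows "quad_form V (adj E) y \<le> spectral_radius V E * sq_norm V y"
proof -
  obtain x where "\<And>y. quad_form V (adj E) y \<le> spectral_radius V E * sq_norm V y"
    by (rule Perron_vector[OF assms]) blast
  then show ?thesis .
qed

lemma graph_iso_adj_eigenvalues_subset:
  assumes iso: "graph_iso V E W F"
  shows "adj_eigenvalues V E \<subseteq> adj_eigenvalues W F"
proof
  fix mu assume "mu \<in> adj_eigenvalues V E"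
  then obtain x v0 where x: "v0 \<in> V" "x v0 \<noteq> 0" "eigen_equation V (adj E) mu x"
    unfolding adj_eigenvalues_def by blast
  obtain f where f: "bij_betw f V W" "\<forall>u\<in>V. \<forall>v\<in>V. {u, v} \<in> E \<longleftrightarrow> {f u, f v} \<in> F"
    using iso unfolding graph_iso_def by blast
  define g where "g = inv_into V f"
  define y where "y = x \<circ> g"
  have gf: "g (f v) = v" if "v \<in> V" for v
    unfolding g_def using f(1) that by (simp add: bij_betw_inv_into_left)
  have "eigen_equation W (adj F) mu y"
  proof
    fix w' assume "w' \<in> W"
    then obtain v where v: "v \<in> V" "w' = f v" using f(1) unfolding bij_betw_def by auto
    have "(\<Sum>w\<in>W. adj F w' w * y w) = (\<Sum>u\<in>V. adj F (f v) (f u) * y (f u))"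
      using sum.reindex_bij_betw[OF f(1), of "\<lambda>w. adj F w' w * y w"] v by simp
    also have "\<dots> = (\<Sum>u\<in>V. adj E v u * x u)"
      using f(2) v(1) by (intro sum.cong) (auto simp: adj_def y_def gf)
    also have "\<dots> = mu * y w'" using x(3) v by (simp add: y_def gf)
    finally show "(\<Sum>w\<in>W. adj F w' w * y w) = mu * y w'" .
  qed
  moreover have "f v0 \<in> W" "y (f v0) \<noteq> 0" using f(1) x(1,2) by (auto simp: y_def gf bij_betw_def)
  ultimately show "mu \<in> adj_eigenvalues W F" unfolding adj_eigenvalues_def by blast
qed

lemma graph_iso_sym:
  assumes "graph_iso V E W F" shows "graph_iso W F V E"
proof -
  obtain f where f: "bij_betw f V W" "\<forall>u\<in>V. \<forall>v\<in>V. {u, v} \<in> E \<longleftrightarrow> {f u, f v} \<in> F"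
    using assms unfolding graph_iso_def by blast
  define g where "g = inv_into V f"
  have g: "bij_betw g W V" unfolding g_def by (rule bij_betw_inv_into[OF f(1)])
  have "f (g w) = w" if "w \<in> W" for w
    unfolding g_def using f(1) that by (simp add: bij_betw_inv_into_right)
  moreover have "g w \<in> V" if "w \<in> W" for w using g that by (auto simp: bij_betw_def)
  ultimately have "\<forall>u\<in>W. \<forall>v\<in>W. {u, v} \<in> F \<longleftrightarrow> {g u, g v} \<in> E"
    using f(2) by (metis (no_types, lifting))
  then show ?thesis unfolding graph_iso_def using g by blast
qed

lemma graph_iso_spectral_radius_eq:
  assumes "graph_iso V E W F"
  shows "spectral_radius V E = spectral_radius W F"
proof -
  have "adj_eigenvalues V E = adj_eigenvalues W F"
    using graph_iso_adj_eigenvalues_subset[OF assms]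
      graph_iso_adj_eigenvalues_subset[OF graph_iso_sym[OF assms]] by (rule subset_antisym)
  then show ?thesis unfolding spectral_radius_def by simp
qed

text \<open>A vertex adjacent to all others spreads a zero of a nonnegative eigenvector to the whole
  graph, so such an eigenvector is positive.\<close>

lemma nonneg_eigenvector_pos_if_dominating_vertex:
  assumes fin: "finite V" and x: "\<And>v. x v \<ge> 0" "sq_norm V x = 1" "eigen_equation V (adj E) r x"
    and c: "c \<in> V" "\<forall>w\<in>V. w \<noteq> c \<longrightarrow> {c, w} \<in> E"
  shows "\<forall>v\<in>V. x v > 0"
proof (rule ccontr)
  have spread: "x w = 0" if "v \<in> V" "w \<in> V" "x v = 0" "{v, w} \<in> E" for v w
  proof -
    have "(\<Sum>u\<in>V. adj E v u * x u) = 0" using x(3) that by simp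
    moreover have nn: "\<And>u. u \<in> V \<Longrightarrow> adj E v u * x u \<ge> 0" by (simp add: adj_nonneg x(1))
    ultimately have "\<forall>u\<in>V. adj E v u * x u = 0" using sum_nonneg_eq_0_iff[OF fin nn] by simp
    then have "adj E v w * x w = 0" using that(2) by blast
    then show ?thesis using that(4) by (simp add: adj_def)
  qed
  assume "\<not> (\<forall>v\<in>V. x v > 0)"
  then obtain v where "v \<in> V" "\<not> x v > 0" by blast
  then have v: "v \<in> V" "x v = 0" using x(1)[of v] by auto
  have "x c = 0"
  proof (cases "v = c")
    case False
    then have "{c, v} \<in> E" using c v(1) by blast
    then have "{v, c} \<in> E" by (simp add: insert_commute)
    then show ?thesis using spread[OF v(1) c(1) v(2)] by blast
  qed (use v in simp)
  then have "x w = 0" if "w \<in> V" for w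
    using spread[OF c(1) that] c that by (cases "w = c") auto
  then have "sq_norm V x = 0" using sq_norm_eq_0_iff[OF fin] by blast
  then show False using x(2) by simp
qed

lemma spectral_radius_mono:
  assumes "finite V" "V \<noteq> {}" "E \<subseteq> E'"
  shows "spectral_radius V E \<le> spectral_radius V E'"
proof -
  obtain x where x: "\<And>v. x v \<ge> 0" "sq_norm V x = 1" "eigen_equation V (adj E) (spectral_radius V E) x"
    by (rule Perron_vector[OF assms(1,2)]) blast
  have "spectral_radius V E = quad_form V (adj E) x" using quad_form_eigenvector[OF x(3)] x(2) by simp
  also have "\<dots> \<le> quad_form V (adj E') x" unfolding quad_form_def
    by (intro sum_mono) (simp add: x(1) adj_mono[OF assms(3)] mult_right_mono)
  also have "\<dots> \<le> spectral_radius V E'"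
    using quad_form_adj_le_spectral_radius[OF assms(1,2)] x(2) by (metis mult.right_neutral)
  finally show ?thesis .
qed

text \<open>The Perron vector of the smaller graph is also one of the larger graph, hence positive, and
  comparing the two eigen-equations row by row rules out any extra edge.\<close>

lemma spectral_radius_eq_imp_same_edges:
  assumes fin: "finite V" and ne: "V \<noteq> {}" and sub: "E \<subseteq> E'"
    and c: "c \<in> V" "\<forall>w\<in>V. w \<noteq> c \<longrightarrow> {c, w} \<in> E'"
    and eq: "spectral_radius V E = spectral_radius V E'"
    and uv: "u \<in> V" "v \<in> V" "{u, v} \<in> E'"
  shows "{u, v} \<in> E"
proof -
  obtain x where x: "\<And>v. x v \<ge> 0" "sq_norm V x = 1" "eigen_equation V (adj E) (spectral_radius V E) x"
    by (rule Perron_vector[OF fin ne]) blast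
  have "spectral_radius V E = quad_form V (adj E) x" using quad_form_eigenvector[OF x(3)] x(2) by simp
  moreover have "quad_form V (adj E) x \<le> quad_form V (adj E') x" unfolding quad_form_def
    by (intro sum_mono) (simp add: x(1) adj_mono[OF sub] mult_right_mono)
  moreover have "quad_form V (adj E') x \<le> spectral_radius V E'"
    using quad_form_adj_le_spectral_radius[OF fin ne] x(2) by (metis mult.right_neutral)
  ultimately have "quad_form V (adj E') x = spectral_radius V E'" using eq by linarith
  then have ev': "eigen_equation V (adj E') (spectral_radius V E') x"
    by (rule eigenvector_if_maximises_Rayleigh[OF symmetric_on_adj fin
          quad_form_adj_le_spectral_radius[OF fin ne] x(2)])
  have pos: "\<forall>v\<in>V. x v > 0" by (rule nonneg_eigenvector_pos_if_dominating_vertex[OF fin x(1,2) ev' c])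
  have "(\<Sum>w\<in>V. (adj E' u w - adj E u w) * x w) = 0"
    using ev' x(3) uv(1) eq by (simp add: left_diff_distrib sum_subtractf)
  moreover have nn: "\<And>w. w \<in> V \<Longrightarrow> (adj E' u w - adj E u w) * x w \<ge> 0"
    using adj_mono[OF sub] x(1) by simp
  ultimately have "\<forall>w\<in>V. (adj E' u w - adj E u w) * x w = 0" using sum_nonneg_eq_0_iff[OF fin nn] by simp
  then have "(adj E' u v - adj E u v) * x v = 0" using uv(2) by blast
  moreover have "x v \<noteq> 0" using pos uv(2) by force
  ultimately have "adj E' u v = adj E u v" by simp
  then show ?thesis using uv(3) by (simp add: adj_def split: if_splits)
qed

section \<open>Disjoint paths P_3\<close>

definition neighbours :: "'a set set \<Rightarrow> 'a set \<Rightarrow> 'a \<Rightarrow> 'a set" where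
  "neighbours E V v = {u\<in>V. {v, u} \<in> E}"

lemma neighbours_subset: "neighbours E V v \<subseteq> V"
  unfolding neighbours_def by auto

lemma finite_neighbours: "finite V \<Longrightarrow> finite (neighbours E V v)"
  using finite_subset[OF neighbours_subset] .

lemma not_in_neighbours_self: "\<forall>e\<in>E. card e = 2 \<Longrightarrow> v \<notin> neighbours E V v"
  unfolding neighbours_def by auto

lemma sum_adj_eq_sum_neighbours:
  assumes "finite V"
  shows "(\<Sum>u\<in>V. adj E v u * x u) = (\<Sum>u\<in>neighbours E V v. x u)"
proof -
  have "(\<Sum>u\<in>neighbours E V v. x u) = (\<Sum>u\<in>V. if {v,u} \<in> E then x u else 0)"
    unfolding neighbours_def using assms by (rule sum.inter_filter)
  also have "\<dots> = (\<Sum>u\<in>V. adj E v u * x u)" unfolding adj_def by (rule sum.cong) auto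
  finally show ?thesis by simp
qed

lemma card_neighbours_Int:
  assumes "finite B" "B \<subseteq> V"
  shows "card (neighbours E V u \<inter> B) = (\<Sum>t\<in>B. if {u,t} \<in> E then 1 else 0)"
proof -
  have "neighbours E V u \<inter> B = {t\<in>B. {u,t} \<in> E}" using assms(2) unfolding neighbours_def by auto
  then show ?thesis using sum.inter_filter[OF assms(1), of "\<lambda>_. 1::nat"] by simp
qed

lemma sum_card_neighbours_Int_swap:
  assumes "finite A" "finite B" "A \<subseteq> V" "B \<subseteq> V"
  shows "(\<Sum>u\<in>A. card (neighbours E V u \<inter> B)) = (\<Sum>t\<in>B. card (neighbours E V t \<inter> A))"
proof -
  have "(\<Sum>u\<in>A. card (neighbours E V u \<inter> B)) = (\<Sum>u\<in>A. \<Sum>t\<in>B. if {u,t} \<in> E then 1 else 0)"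
    using card_neighbours_Int[OF assms(2,4)] by simp
  also have "\<dots> = (\<Sum>t\<in>B. \<Sum>u\<in>A. if {t,u} \<in> E then 1 else 0)"
    by (subst sum.swap) (simp add: insert_commute)
  also have "\<dots> = (\<Sum>t\<in>B. card (neighbours E V t \<inter> A))"
    using card_neighbours_Int[OF assms(1,3)] by simp
  finally show ?thesis .
qed

definition kP3_embedding :: "'a set set \<Rightarrow> 'a set \<Rightarrow> nat \<Rightarrow> (nat \<times> nat \<Rightarrow> 'a) \<Rightarrow> bool" where
  "kP3_embedding E X j f \<longleftrightarrow>
     inj_on f (kP3_verts j) \<and> f ` kP3_verts j \<subseteq> X \<and> (\<forall>e\<in>kP3_edges j. f ` e \<in> E)"

lemma contains_kP3_iff: "contains_subgraph V E (kP3_verts k) (kP3_edges k) \<longleftrightarrow> (\<exists>f. kP3_embedding E V k f)"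
  unfolding contains_subgraph_def kP3_embedding_def by blast

lemma kP3_verts_Suc: "kP3_verts (Suc j) = kP3_verts j \<union> {(j,0),(j,1),(j,2)}"
  unfolding kP3_verts_def by auto

lemma kP3_edges_Suc: "kP3_edges (Suc j) = kP3_edges j \<union> {{(j,0),(j,1)},{(j,1),(j,2)}}"
  unfolding kP3_edges_def by (auto simp: atLeastLessThanSuc)

lemma card_image_kP3_verts: "card (f ` kP3_verts j) \<le> 3 * j"
  using card_image_le[of "kP3_verts j" f] unfolding kP3_verts_def by (simp add: card_cartesian_product)

lemma kP3_embedding_0: "kP3_embedding E X 0 f"
  unfolding kP3_embedding_def kP3_verts_def kP3_edges_def by auto

lemma kP3_embedding_mono: "kP3_embedding E X j f \<Longrightarrow> X \<subseteq> Y \<Longrightarrow> kP3_embedding E Y j f"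
  unfolding kP3_embedding_def by auto

lemma kP3_embedding_Suc:
  assumes f: "kP3_embedding E X j f"
    and abc: "a \<in> X - f ` kP3_verts j" "b \<in> X - f ` kP3_verts j" "c \<in> X - f ` kP3_verts j"
    and dist: "a \<noteq> b" "a \<noteq> c" "b \<noteq> c"
    and ed: "{c, a} \<in> E" "{c, b} \<in> E"
  shows "kP3_embedding E X (Suc j) (f((j,0) := a, (j,1) := c, (j,2) := b))"
proof -
  let ?g = "f((j,0) := a, (j,1) := c, (j,2) := b)"
  let ?N = "{(j,0),(j,1),(j,2)}"
  have agree: "?g p = f p" if "p \<in> kP3_verts j" for p
    using that unfolding kP3_verts_def by auto
  then have old: "?g ` kP3_verts j = f ` kP3_verts j" by (rule image_cong[OF refl])
  have new: "?g ` ?N = {a, c, b}" by auto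
  have "inj_on ?g (kP3_verts j \<union> ?N)" unfolding inj_on_Un
  proof (intro conjI)
    have "inj_on ?g (kP3_verts j) = inj_on f (kP3_verts j)" by (rule inj_on_cong) (rule agree)
    then show "inj_on ?g (kP3_verts j)" using f unfolding kP3_embedding_def by blast
    show "inj_on ?g ?N" using dist by (auto simp: inj_on_def)
    have "kP3_verts j \<inter> ?N = {}" unfolding kP3_verts_def by auto
    then have disj: "kP3_verts j - ?N = kP3_verts j" "?N - kP3_verts j = ?N" by blast+
    show "?g ` (kP3_verts j - ?N) \<inter> ?g ` (?N - kP3_verts j) = {}"
      unfolding disj old new using abc by auto
  qed
  moreover have "?g ` (kP3_verts j \<union> ?N) \<subseteq> X"
    unfolding image_Un old new using f abc unfolding kP3_embedding_def by auto
  moreover have "?g ` e \<in> E" if e: "e \<in> kP3_edges (Suc j)" for e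
  proof -
    consider "e \<in> kP3_edges j" | "e = {(j,0),(j,1)}" | "e = {(j,1),(j,2)}"
      using e unfolding kP3_edges_Suc by auto
    then show ?thesis
    proof cases
      case 1
      then have "e \<subseteq> kP3_verts j" unfolding kP3_edges_def kP3_verts_def by auto
      then have "?g ` e = f ` e" by (intro image_cong refl agree) blast
      then show ?thesis using f 1 unfolding kP3_embedding_def by auto
    qed (use ed in \<open>auto simp: insert_commute\<close>)
  qed
  ultimately show ?thesis unfolding kP3_embedding_def kP3_verts_Suc by blast
qed

lemma two_elements_if_card_ge_2:
  assumes "finite A" "2 \<le> card A"
  obtains a b where "a \<in> A" "b \<in> A" "a \<noteq> b"
proof -
  obtain B where "B \<subseteq> A" "card B = 2" using obtain_subset_with_card_n[OF assms(2)] by blast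
  then show ?thesis using that unfolding card_2_iff by blast
qed

text \<open>Vertices of degree at least 3 j + 3 |C| - 1 can each be made the centre of a new path,
  one after the other, whatever was embedded before.\<close>

lemma kP3_embedding_greedy:
  assumes fin: "finite V" and simple: "\<forall>e\<in>E. card e = 2"
    and C: "finite C" "C \<subseteq> V"
    and f: "kP3_embedding E (V - C) j f"
    and deg: "\<forall>c\<in>C. 3 * (j + card C) \<le> card (neighbours E V c) + 1"
  shows "\<exists>g. kP3_embedding E V (j + card C) g"
  using C f deg
proof (induction C arbitrary: j f rule: finite_induct)
  case empty
  then show ?case by auto
next
  case (insert c C)
  let ?I = "f ` kP3_verts j"
  define A where "A = neighbours E V c - ?I - C"
  have "card (neighbours E V c) \<le> card A + card ?I + card C"
  proof -
    have "card (neighbours E V c) \<le> card (A \<union> ?I \<union> C)"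
      unfolding A_def using fin insert.hyps(1)
      by (intro card_mono) (auto simp: kP3_verts_def finite_neighbours)
    also have "\<dots> \<le> card A + card ?I + card C" by (meson card_Un_le add_le_mono1 le_trans)
    finally show ?thesis .
  qed
  moreover have "3 * (j + card (insert c C)) \<le> card (neighbours E V c) + 1" using insert.prems(3) by auto
  ultimately have "2 \<le> card A" using card_image_kP3_verts[of f j] insert.hyps by simp
  then obtain a b where ab: "a \<in> A" "b \<in> A" "a \<noteq> b"
    using two_elements_if_card_ge_2[of A] finite_neighbours[OF fin] unfolding A_def by blast
  have "c \<notin> neighbours E V c" using not_in_neighbours_self[OF simple] .
  then have "kP3_embedding E (V - C) (Suc j) (f((j,0) := a, (j,1) := c, (j,2) := b))"
    using insert.prems(1,2) insert.hyps(2) ab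
    by (intro kP3_embedding_Suc kP3_embedding_mono[OF insert.prems(2)])
      (auto simp: A_def neighbours_def kP3_embedding_def)
  moreover have "\<forall>c\<in>C. 3 * (Suc j + card C) \<le> card (neighbours E V c) + 1"
    using insert.prems(3) insert.hyps by auto
  ultimately obtain g where "kP3_embedding E V (Suc j + card C) g"
    using insert.IH insert.prems(1) by blast
  then show ?case using insert.hyps by auto
qed

lemma high_degree_card_lt:
  assumes fin: "finite V" and simple: "\<forall>e\<in>E. card e = 2"
    and no: "\<not> (\<exists>f. kP3_embedding E V k f)"
  shows "card {v\<in>V. 3 * k \<le> card (neighbours E V v) + 1} < k"
proof (rule ccontr)
  let ?L = "{v\<in>V. 3 * k \<le> card (neighbours E V v) + 1}"
  assume "\<not> ?thesis"
  then obtain C where C: "C \<subseteq> ?L" "card C = k" "finite C"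
    by (meson not_less obtain_subset_with_card_n)
  have "\<exists>g. kP3_embedding E V (0 + card C) g"
    using C by (intro kP3_embedding_greedy[OF fin simple] kP3_embedding_0) auto
  then show False using no C(2) by simp
qed

lemma no_kP3_in_low_degree_part:
  assumes fin: "finite V" and simple: "\<forall>e\<in>E. card e = 2"
    and no: "\<not> (\<exists>f. kP3_embedding E V k f)"
    and L: "L = {v\<in>V. 3 * k \<le> card (neighbours E V v) + 1}"
  shows "\<not> (\<exists>f. kP3_embedding E (V - L) (k - card L) f)"
proof
  assume "\<exists>f. kP3_embedding E (V - L) (k - card L) f"
  then obtain f where f: "kP3_embedding E (V - L) (k - card L) f" by blast
  have lt: "card L < k" unfolding L by (rule high_degree_card_lt[OF fin simple no])
  have "\<exists>g. kP3_embedding E V (k - card L + card L) g"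
    using lt L fin by (intro kP3_embedding_greedy[OF fin simple _ _ f]) auto
  then show False using no lt by simp
qed

lemma degree_le_1_if_no_P3:
  assumes simple: "\<forall>e\<in>E. card e = 2" and no: "\<not> (\<exists>f. kP3_embedding E X 1 f)"
    and "u \<in> X" "a \<in> X" "c \<in> X" "{u, a} \<in> E" "{u, c} \<in> E"
  shows "a = c"
proof (rule ccontr)
  assume "a \<noteq> c"
  moreover have "a \<noteq> u" "c \<noteq> u" using assms(6,7) simple by fastforce+
  ultimately have "kP3_embedding E X (Suc 0) ((\<lambda>_. undefined)((0,0) := a, (0,1) := u, (0,2) := c))"
    using assms(3-7) by (intro kP3_embedding_Suc kP3_embedding_0) (auto simp: kP3_verts_def)
  then show False using no by auto
qed

lemma maximal_kP3_embedding:
  assumes "\<not> (\<exists>f. kP3_embedding E R j0 f)"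
  obtains j f where "j < j0" "kP3_embedding E R j f" "\<not> (\<exists>g. kP3_embedding E R (Suc j) g)"
proof -
  define m where "m = (LEAST m. \<not> (\<exists>f. kP3_embedding E R m f))"
  have m: "\<not> (\<exists>f. kP3_embedding E R m f)" unfolding m_def using assms by (rule LeastI)
  have "m \<le> j0" unfolding m_def using assms by (rule Least_le)
  moreover have "m \<noteq> 0"
  proof
    assume "m = 0"
    then show False using m kP3_embedding_0 by blast
  qed
  moreover have "\<exists>f. kP3_embedding E R (m - 1) f"
    using not_less_Least[of "m - 1" "\<lambda>m. \<not> (\<exists>f. kP3_embedding E R m f)"] \<open>m \<noteq> 0\<close>
    unfolding m_def[symmetric] by simp
  ultimately show ?thesis using that m by (metis Suc_pred' diff_less less_le_trans not_gr0 zero_less_one)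
qed

text \<open>Edges inside R either meet T, where degrees are at most d, or form a matching.\<close>

lemma sum_card_neighbours_le_if_matching_outside:
  assumes fin: "finite V" and R: "R \<subseteq> V" and TR: "T \<subseteq> R"
    and deg: "\<forall>u\<in>R. card (neighbours E V u) \<le> d"
    and matching: "\<forall>u\<in>R - T. card (neighbours E V u \<inter> (R - T)) \<le> 1"
  shows "(\<Sum>u\<in>R. card (neighbours E V u \<inter> R)) \<le> card R + 2 * (card T * d)"
proof -
  have finR: "finite R" and finT: "finite T" using finite_subset[OF R fin] finite_subset[OF TR] by auto
  have deg': "card (neighbours E V u \<inter> X) \<le> d" if "u \<in> R" for u X
    using card_mono[OF finite_neighbours[OF fin], of "neighbours E V u \<inter> X" E u] deg that by fastforce
  have "(\<Sum>u\<in>R - T. card (neighbours E V u \<inter> R)) \<le> (\<Sum>u\<in>R - T. 1 + card (neighbours E V u \<inter> T))"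
  proof (rule sum_mono)
    fix u assume u: "u \<in> R - T"
    have "neighbours E V u \<inter> R = (neighbours E V u \<inter> (R - T)) \<union> (neighbours E V u \<inter> T)" using TR by auto
    then show "card (neighbours E V u \<inter> R) \<le> 1 + card (neighbours E V u \<inter> T)"
      using card_Un_le matching u by (metis add_le_mono1 le_trans)
  qed
  also have "\<dots> = card (R - T) + (\<Sum>u\<in>R - T. card (neighbours E V u \<inter> T))"
    by (simp add: sum_Suc)
  also have "(\<Sum>u\<in>R - T. card (neighbours E V u \<inter> T)) = (\<Sum>t\<in>T. card (neighbours E V t \<inter> (R - T)))"
    using finR finT TR R by (intro sum_card_neighbours_Int_swap) auto
  also have "card (R - T) + (\<Sum>t\<in>T. card (neighbours E V t \<inter> (R - T))) \<le> card R + card T * d"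
    using sum_bounded_above[of T "\<lambda>t. card (neighbours E V t \<inter> (R - T))" d] deg' TR finR
      card_mono[of R "R - T"]
    by (intro add_mono) auto
  finally have "(\<Sum>u\<in>R - T. card (neighbours E V u \<inter> R)) \<le> card R + card T * d" .
  moreover have "(\<Sum>u\<in>T. card (neighbours E V u \<inter> R)) \<le> card T * d"
    using sum_bounded_above[of T "\<lambda>u. card (neighbours E V u \<inter> R)" d] deg' TR by auto
  moreover have "(\<Sum>u\<in>R. card (neighbours E V u \<inter> R))
      = (\<Sum>u\<in>R - T. card (neighbours E V u \<inter> R)) + (\<Sum>u\<in>T. card (neighbours E V u \<inter> R))"
    by (rule sum.subset_diff[OF TR finR])
  ultimately show ?thesis by linarith
qed

text \<open>Outside the image T of a maximal embedding no vertex has two neighbours, else a further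
  path would fit.\<close>

lemma sum_card_neighbours_le_if_no_kP3:
  assumes fin: "finite V" and simple: "\<forall>e\<in>E. card e = 2" and R: "R \<subseteq> V"
    and deg: "\<forall>u\<in>R. card (neighbours E V u) \<le> d"
    and no: "\<not> (\<exists>f. kP3_embedding E R j0 f)"
  shows "(\<Sum>u\<in>R. card (neighbours E V u \<inter> R)) \<le> card R + 6 * (j0 - 1) * d"
proof -
  obtain j f where j: "j < j0" and f: "kP3_embedding E R j f"
    and nosuc: "\<not> (\<exists>g. kP3_embedding E R (Suc j) g)"
    using maximal_kP3_embedding[OF no] by blast
  define T where "T = f ` kP3_verts j"
  have TR: "T \<subseteq> R" using f unfolding kP3_embedding_def T_def by auto
  have "card (neighbours E V u \<inter> (R - T)) \<le> 1" if u: "u \<in> R - T" for u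
  proof (rule ccontr)
    assume "\<not> ?thesis"
    then obtain a b where ab: "a \<in> neighbours E V u \<inter> (R - T)" "b \<in> neighbours E V u \<inter> (R - T)" "a \<noteq> b"
      using two_elements_if_card_ge_2[of "neighbours E V u \<inter> (R - T)"] finite_subset[OF R fin] by auto
    have "u \<notin> neighbours E V u" by (rule not_in_neighbours_self[OF simple])
    then have "kP3_embedding E R (Suc j) (f((j,0) := a, (j,1) := u, (j,2) := b))"
      using ab u by (intro kP3_embedding_Suc[OF f]) (auto simp: T_def neighbours_def)
    then show False using nosuc by blast
  qed
  then have "(\<Sum>u\<in>R. card (neighbours E V u \<inter> R)) \<le> card R + 2 * (card T * d)"
    using sum_card_neighbours_le_if_matching_outside[OF fin R TR deg] by blast
  also have "\<dots> \<le> card R + 6 * (j0 - 1) * d"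
  proof -
    have "card T * d \<le> 3 * (j0 - 1) * d"
      using card_image_kP3_verts[of f j] j unfolding T_def by (intro mult_right_mono) auto
    then show ?thesis by simp
  qed
  finally show ?thesis .
qed

section \<open>The extremal graph F_{n,k}\<close>

text \<open>The pairs b + 2 i, b + 2 i + 1 are the edges p K_2 of F_{n,k}.\<close>

lemma pair_numbering:
  assumes "finite R"
    and matching: "\<forall>u\<in>R. \<forall>a\<in>R. \<forall>c\<in>R. {u,a} \<in> E \<longrightarrow> {u,c} \<in> E \<longrightarrow> a = c"
    and simple: "\<forall>e\<in>E. card e = 2"
  shows "\<exists>g. bij_betw g R {b..<b + card R} \<and>
           (\<forall>u\<in>R. \<forall>w\<in>R. {u,w} \<in> E \<longrightarrow> (g u - b) div 2 = (g w - b) div 2)"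
  using assms(1,2)
proof (induction "card R" arbitrary: R b rule: less_induct)
  case less
  show ?case
  proof (cases "\<exists>u\<in>R. \<exists>w\<in>R. {u,w} \<in> E")
    case False
    obtain h where "bij_betw h R {0..<card R}" using ex_bij_betw_finite_nat[OF less.prems(1)] by blast
    moreover have "bij_betw ((+) b) {0..<card R} {b..<b + card R}" by (simp add: bij_betw_def add.commute)
    ultimately have "bij_betw ((+) b \<circ> h) R {b..<b + card R}" by (rule bij_betw_trans)
    then show ?thesis using False by blast
  next
    case True
    then obtain u w where uw: "u \<in> R" "w \<in> R" "{u,w} \<in> E" by blast
    then have "u \<noteq> w" using simple by fastforce
    define R' where "R' = R - {u,w}"
    have "card {u,w} \<le> card R" using uw less.prems(1) by (intro card_mono) auto
    then have cR: "card R = card R' + 2"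
      unfolding R'_def using uw \<open>u \<noteq> w\<close> less.prems(1) by (simp add: card_Diff_subset)
    moreover have "finite R'" unfolding R'_def using less.prems(1) by simp
    moreover have "\<forall>x\<in>R'. \<forall>a\<in>R'. \<forall>c\<in>R'. {x,a} \<in> E \<longrightarrow> {x,c} \<in> E \<longrightarrow> a = c"
      using less.prems(2) unfolding R'_def by blast
    ultimately obtain g' where g': "bij_betw g' R' {b+2..<b+2 + card R'}"
      "\<forall>x\<in>R'. \<forall>y\<in>R'. {x,y} \<in> E \<longrightarrow> (g' x - (b+2)) div 2 = (g' y - (b+2)) div 2"
      using less.hyps[of R' "b+2"] by auto
    define g where "g x = (if x = u then b else if x = w then b + 1 else g' x)" for x
    have "bij_betw g {u,w} {b, b+1}" unfolding g_def bij_betw_def inj_on_def using \<open>u \<noteq> w\<close> by auto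
    moreover have "bij_betw g R' {b+2..<b+2 + card R'}"
      using g'(1) by (rule bij_betw_cong[THEN iffD1, rotated]) (auto simp: g_def R'_def)
    ultimately have "bij_betw g ({u,w} \<union> R') ({b, b+1} \<union> {b+2..<b+2 + card R'})"
      by (rule bij_betw_combine) auto
    moreover have "{u,w} \<union> R' = R" unfolding R'_def using uw by auto
    moreover have "{b, b+1} \<union> {b+2..<b+2 + card R'} = {b..<b + card R}" using cR by auto
    ultimately have bij: "bij_betw g R {b..<b + card R}" by simp
    have closed: "y \<in> {u,w}" if "x \<in> {u,w}" "y \<in> R" "{x,y} \<in> E" for x y
      using that uw less.prems(2) by (auto simp: insert_commute)
    have "(g x - b) div 2 = (g y - b) div 2" if xy: "x \<in> R" "y \<in> R" "{x,y} \<in> E" for x y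
    proof (cases "x \<in> {u,w}")
      case True
      then show ?thesis using closed[OF True xy(2,3)] by (auto simp: g_def)
    next
      case False
      have "y \<notin> {u,w}" using closed[of y x] xy False by (auto simp: insert_commute)
      then have "x \<in> R'" "y \<in> R'" using False xy unfolding R'_def by auto
      moreover have "g' z \<ge> b + 2" if "z \<in> R'" for z using g'(1) that by (auto simp: bij_betw_def)
      moreover have "(m - b) div 2 = (m - (b + 2)) div 2 + 1" if "m \<ge> b + 2" for m :: nat
        using that by presburger
      moreover have "g x = g' x" "g y = g' y" using False \<open>y \<notin> {u,w}\<close> by (auto simp: g_def)
      ultimately show ?thesis using g'(2) xy(3) by metis
    qed
    then show ?thesis using bij by blast
  qed
qed

lemma F_edges_intro:
  assumes "x < n" "y < n" "x \<noteq> y" "x < k - 1 \<or> y < k - 1 \<or> (x - (k - 1)) div 2 = (y - (k - 1)) div 2"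
  shows "{x, y} \<in> F_edges n k"
  unfolding F_edges_def using assms by blast

lemma F_numbering:
  assumes sg: "simple_graph V E" and n: "card V = n" and nk: "k \<le> n"
    and L: "L \<subseteq> V" "card L = k - 1"
    and matching: "\<forall>u\<in>V - L. \<forall>a\<in>V - L. \<forall>c\<in>V - L. {u,a} \<in> E \<longrightarrow> {u,c} \<in> E \<longrightarrow> a = c"
  obtains phi where "bij_betw phi V {0..<n}"
    "\<And>u v. u \<in> V \<Longrightarrow> v \<in> V \<Longrightarrow> {u, v} \<in> E \<Longrightarrow> {phi u, phi v} \<in> F_edges n k"
proof -
  have fin: "finite V" and ed: "\<forall>e\<in>E. e \<subseteq> V \<and> card e = 2"
    using sg unfolding simple_graph_def by auto
  have finL: "finite L" using finite_subset[OF L(1) fin] .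
  obtain hL where hL: "bij_betw hL L {0..<k-1}" using ex_bij_betw_finite_nat[OF finL] L(2) by auto
  have cR: "card (V - L) = n - (k - 1)" using card_Diff_subset[OF finL L(1)] n L(2) by simp
  obtain g where g: "bij_betw g (V - L) {k-1..<n}"
    "\<forall>u\<in>V - L. \<forall>w\<in>V - L. {u,w} \<in> E \<longrightarrow> (g u - (k-1)) div 2 = (g w - (k-1)) div 2"
    using pair_numbering[of "V - L" E "k - 1"] fin matching ed cR nk by auto
  define phi where "phi x = (if x \<in> L then hL x else g x)" for x
  have "bij_betw phi L {0..<k-1}"
    using hL by (rule bij_betw_cong[THEN iffD1, rotated]) (simp add: phi_def)
  moreover have "bij_betw phi (V - L) {k-1..<n}"
    using g(1) by (rule bij_betw_cong[THEN iffD1, rotated]) (simp add: phi_def)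
  ultimately have "bij_betw phi (L \<union> (V - L)) ({0..<k-1} \<union> {k-1..<n})"
    by (rule bij_betw_combine) auto
  moreover have "L \<union> (V - L) = V" "{0..<k-1} \<union> {k-1..<n} = {0..<n}" using L(1) nk by auto
  ultimately have phi: "bij_betw phi V {0..<n}" by simp
  have low: "phi x < k - 1" if "x \<in> L" for x using that bij_betwE[OF hL] by (auto simp: phi_def)
  have "{phi u, phi v} \<in> F_edges n k" if uv: "u \<in> V" "v \<in> V" "{u, v} \<in> E" for u v
  proof (rule F_edges_intro)
    show "phi u < n" "phi v < n" using phi uv by (auto simp: bij_betw_def)
    have "u \<noteq> v" using ed uv(3) by fastforce
    then show "phi u \<noteq> phi v" using phi uv by (auto simp: bij_betw_def inj_on_def)
    show "phi u < k - 1 \<or> phi v < k - 1 \<or> (phi u - (k - 1)) div 2 = (phi v - (k - 1)) div 2"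
    proof (cases "u \<in> L \<or> v \<in> L")
      case False
      then show ?thesis using g(2) uv by (simp add: phi_def)
    qed (use low in blast)
  qed
  then show ?thesis using that phi by blast
qed

lemma graph_iso_preimage:
  assumes "bij_betw phi V W"
  shows "graph_iso V {{u, v} | u v. u \<in> V \<and> v \<in> V \<and> {phi u, phi v} \<in> F} W F"
  unfolding graph_iso_def
proof (intro exI conjI ballI)
  show "bij_betw phi V W" by (rule assms)
  fix u v assume "u \<in> V" "v \<in> V"
  show "{u, v} \<in> {{u, v} | u v. u \<in> V \<and> v \<in> V \<and> {phi u, phi v} \<in> F} \<longleftrightarrow> {phi u, phi v} \<in> F"
  proof
    assume "{u, v} \<in> {{u, v} | u v. u \<in> V \<and> v \<in> V \<and> {phi u, phi v} \<in> F}"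
    then obtain u' v' where "{u, v} = {u', v'}" "{phi u', phi v'} \<in> F" by blast
    then show "{phi u, phi v} \<in> F" by (metis doubleton_eq_iff)
  qed (use \<open>u \<in> V\<close> \<open>v \<in> V\<close> in blast)
qed

text \<open>When the vertices outside the k - 1 vertices of L span a matching, G lies inside a copy
  of F_{n,k}, in which the preimage of vertex 0 is adjacent to everything.\<close>

lemma spectral_radius_le_F_if_matching:
  assumes sg: "simple_graph V E" and n: "card V = n" and k: "k \<ge> 2" and nk: "k \<le> n"
    and L: "L \<subseteq> V" "card L = k - 1"
    and matching: "\<forall>u\<in>V - L. \<forall>a\<in>V - L. \<forall>c\<in>V - L. {u,a} \<in> E \<longrightarrow> {u,c} \<in> E \<longrightarrow> a = c"
  shows "spectral_radius V E \<le> spectral_radius (F_verts n) (F_edges n k) \<and>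
         (spectral_radius V E = spectral_radius (F_verts n) (F_edges n k) \<longleftrightarrow>
          graph_iso V E (F_verts n) (F_edges n k))"
proof -
  have fin: "finite V" and ed: "\<forall>e\<in>E. e \<subseteq> V \<and> card e = 2"
    using sg unfolding simple_graph_def by auto
  obtain phi where phi: "bij_betw phi V {0..<n}"
    and hom: "\<And>u v. u \<in> V \<Longrightarrow> v \<in> V \<Longrightarrow> {u, v} \<in> E \<Longrightarrow> {phi u, phi v} \<in> F_edges n k"
    by (rule F_numbering[OF sg n nk L matching]) blast
  define E' where "E' = {{u, v} | u v. u \<in> V \<and> v \<in> V \<and> {phi u, phi v} \<in> F_edges n k}"
  have iso: "graph_iso V E' (F_verts n) (F_edges n k)"
    unfolding E'_def F_verts_def by (rule graph_iso_preimage[OF phi])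
  have sub: "E \<subseteq> E'"
  proof
    fix e assume "e \<in> E"
    then obtain u v where "e = {u, v}" "u \<in> V" "v \<in> V" using ed by (metis card_2_iff insert_subset)
    then show "e \<in> E'" unfolding E'_def using hom \<open>e \<in> E\<close> by blast
  qed
  define c where "c = inv_into V phi 0"
  have c: "c \<in> V" "phi c = 0"
    using phi nk k unfolding c_def bij_betw_def by (auto intro: inv_into_into f_inv_into_f)
  have dominating: "\<forall>w\<in>V. w \<noteq> c \<longrightarrow> {c, w} \<in> E'"
  proof (intro ballI impI)
    fix w assume w: "w \<in> V" "w \<noteq> c"
    then have "phi w \<noteq> 0" using c phi by (metis bij_betw_def inj_onD)
    then have "{phi c, phi w} \<in> F_edges n k"
      using c phi w k by (intro F_edges_intro) (auto simp: bij_betw_def)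
    then show "{c, w} \<in> E'" unfolding E'_def using w c by blast
  qed
  have ne: "V \<noteq> {}" using c by auto
  have rho_E': "spectral_radius V E' = spectral_radius (F_verts n) (F_edges n k)"
    by (rule graph_iso_spectral_radius_eq[OF iso])
  have "spectral_radius V E = spectral_radius (F_verts n) (F_edges n k) \<Longrightarrow> E' \<subseteq> E"
    using spectral_radius_eq_imp_same_edges[OF fin ne sub c(1) dominating] rho_E'
    unfolding E'_def by auto
  then show ?thesis
    using spectral_radius_mono[OF fin ne sub] rho_E' sub iso graph_iso_spectral_radius_eq
    by (metis subset_antisym)
qed

lemma sum_join_test_vector:
  fixes a :: real
  assumes "K \<le> n"
  defines "y \<equiv> (\<lambda>u::nat. if u < K then a else 1)"
  shows "(\<Sum>u\<in>{0..<n}. \<Sum>v\<in>{0..<n}. if u \<noteq> v \<and> (u < K \<or> v < K) then y u * y v else 0)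
       = real K * (real K - 1) * a^2 + 2 * real K * real (n - K) * a"
    (is "(\<Sum>u\<in>_. \<Sum>v\<in>_. ?T u v) = _")
proof -
  have split: "(\<Sum>u\<in>{0..<n}. f u) = (\<Sum>u\<in>{0..<K}. f u) + (\<Sum>u\<in>{K..<n}. f u)" for f :: "nat \<Rightarrow> real"
    using sum.atLeastLessThan_concat[of 0 K n f] assms(1) by simp
  have sum_y: "(\<Sum>v\<in>{0..<n}. y v) = real K * a + real (n - K)"
    unfolding split by (simp add: y_def)
  have row_K: "(\<Sum>v\<in>{0..<n}. ?T u v) = a * ((real K - 1) * a + real (n - K))" if u: "u < K" for u
  proof -
    have "(\<Sum>v\<in>{0..<n}. ?T u v) = (\<Sum>v\<in>{0..<n} - {u}. a * y v)"
      using u assms(1) by (intro sum.mono_neutral_cong_right) (auto simp: y_def)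
    also have "\<dots> = a * (\<Sum>v\<in>{0..<n}. y v) - a * a"
      using u assms(1) by (simp add: sum_diff1 sum_distrib_left y_def)
    finally show ?thesis unfolding sum_y by (simp add: algebra_simps)
  qed
  have row_rest: "(\<Sum>v\<in>{0..<n}. ?T u v) = real K * a" if u: "K \<le> u" for u
    unfolding split using u by (simp add: y_def)
  have "(\<Sum>u\<in>{0..<n}. \<Sum>v\<in>{0..<n}. ?T u v)
      = real K * (a * ((real K - 1) * a + real (n - K))) + real (n - K) * (real K * a)"
    unfolding split[of "\<lambda>u. \<Sum>v\<in>{0..<n}. ?T u v"] using row_K row_rest by simp
  then show ?thesis by (simp add: algebra_simps power2_eq_square)
qed

text \<open>The test vector is a on the clique K_{k-1} and 1 elsewhere; only the edges of the join
  K_{k-1} \<or> (n - k + 1) K_1 inside F_{n,k} are counted.\<close>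

lemma F_test_vector:
  fixes a :: real
  assumes k: "k \<ge> 2" and nk: "n \<ge> k" and a: "a \<ge> 0"
  defines "y \<equiv> (\<lambda>u::nat. if u < k - 1 then a else 1)"
  shows "quad_form {0..<n} (adj (F_edges n k)) y \<ge>
           real (k-1) * (real (k-1) - 1) * a^2 + 2 * real (k-1) * real (n-(k-1)) * a"
    and "sq_norm {0..<n} y = real (k-1) * a^2 + real (n-(k-1))"
proof -
  have y0: "y u \<ge> 0" for u unfolding y_def using a by simp
  have "(if u \<noteq> v \<and> (u < k - 1 \<or> v < k - 1) then y u * y v else 0) \<le> adj (F_edges n k) u v * y u * y v"
    if "u < n" "v < n" for u v
    using that y0[of u] y0[of v] F_edges_intro[of u n v k] by (auto simp: adj_def)
  then have "(\<Sum>u\<in>{0..<n}. \<Sum>v\<in>{0..<n}. if u \<noteq> v \<and> (u < k - 1 \<or> v < k - 1) then y u * y v else 0)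
      \<le> quad_form {0..<n} (adj (F_edges n k)) y"
    unfolding quad_form_def by (intro sum_mono) auto
  then show "quad_form {0..<n} (adj (F_edges n k)) y \<ge>
           real (k-1) * (real (k-1) - 1) * a^2 + 2 * real (k-1) * real (n-(k-1)) * a"
    using sum_join_test_vector[of "k - 1" n a] nk unfolding y_def by simp
  have "sq_norm {0..<n} y = (\<Sum>u\<in>{0..<k-1}. a^2) + (\<Sum>u\<in>{k-1..<n}. 1)"
    using sum.atLeastLessThan_concat[of 0 "k - 1" n "\<lambda>u. (y u)^2"] nk
    unfolding sq_norm_def by (simp add: y_def)
  then show "sq_norm {0..<n} y = real (k-1) * a^2 + real (n-(k-1))" by simp
qed

lemma spectral_radius_F_ge_1:
  assumes k: "k \<ge> 2" and nk: "n \<ge> k"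
  shows "spectral_radius (F_verts n) (F_edges n k) \<ge> 1"
proof -
  define K where "K = real (k-1)"
  define m where "m = real (n-(k-1))"
  have K1: "K \<ge> 1" and m1: "m \<ge> 1" unfolding K_def m_def using k nk by auto
  have "K * (K - 1) + 2 * K * m - (K + m) = (K - 1) * (K - 1) + ((2 * K - 1) * m - 1)"
    by (simp add: algebra_simps)
  moreover have "(2 * K - 1) * m \<ge> 1" using mult_mono[of 1 "2 * K - 1" 1 m] K1 m1 by simp
  ultimately have "K + m \<le> K * (K - 1) + 2 * K * m" by (smt (verit) zero_le_square)
  also have "\<dots> \<le> quad_form {0..<n} (adj (F_edges n k)) (\<lambda>u. if u < k - 1 then 1 else 1)"
    using F_test_vector(1)[OF k nk, of 1] unfolding K_def m_def by simp
  also have "\<dots> \<le> spectral_radius (F_verts n) (F_edges n k) * (K + m)"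
    using quad_form_adj_le_spectral_radius[of "{0..<n}" "F_edges n k" "\<lambda>_. 1"] F_test_vector(2)[OF k nk, of 1] nk k
    unfolding F_verts_def K_def m_def by simp
  finally show ?thesis using K1 m1 by simp
qed

text \<open>rho(F_{n,k}) is at least the spectral radius of K_{k-1} \<or> (n - k + 1) K_1, the largest
  root of r^2 - (k - 2) r - (k - 1)(n - k + 1); testing with a = r / (k - 1) on the clique shows
  that no smaller r can bound the Rayleigh quotient.\<close>

lemma spectral_radius_F_lower_bound:
  assumes k: "k \<ge> 2" and nk: "n \<ge> k" and r: "r \<ge> spectral_radius (F_verts n) (F_edges n k)"
  shows "r^2 - (real k - 2) * r \<ge> real (k-1) * real (n-(k-1))"
proof (rule ccontr)
  define K where "K = real (k-1)"
  define m where "m = real (n-(k-1))"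
  have K1: "K \<ge> 1" unfolding K_def using k by simp
  assume "\<not> ?thesis"
  then have lt: "r^2 - (K - 1) * r < K * m" unfolding K_def m_def using k by (simp add: of_nat_diff)
  have r1: "r \<ge> 1" using r spectral_radius_F_ge_1[OF k nk] by simp
  define a where "a = r / K"
  have a0: "a \<ge> 0" and Ka: "K * a = r" unfolding a_def using r1 K1 by auto
  define y where "y = (\<lambda>u::nat. if u < k - 1 then a else 1)"
  have Q: "quad_form {0..<n} (adj (F_edges n k)) y \<ge> K * (K - 1) * a^2 + 2 * K * m * a"
    and N: "sq_norm {0..<n} y = K * a^2 + m"
    using F_test_vector[OF k nk a0] unfolding y_def K_def m_def by auto
  have "K * (K - 1) * a^2 + 2 * K * m * a - r * (K * a^2 + m) = r * ((K * m - r^2 + (K - 1) * r) / K)"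
    unfolding Ka[symmetric] using K1 by (simp add: field_simps power2_eq_square)
  also have "\<dots> > 0" using lt K1 r1 by (intro mult_pos_pos divide_pos_pos) auto
  finally have "quad_form {0..<n} (adj (F_edges n k)) y > r * sq_norm {0..<n} y" using Q N by simp
  moreover have "r * sq_norm {0..<n} y \<ge> spectral_radius (F_verts n) (F_edges n k) * sq_norm {0..<n} y"
    using r sq_norm_nonneg[of "{0..<n}" y] by (rule mult_right_mono)
  ultimately show False
    using quad_form_adj_le_spectral_radius[of "{0..<n}" "F_edges n k" y] nk k by (simp add: F_verts_def)
qed

section \<open>Graphs with at most k - 2 vertices of high degree\<close>

lemma cubic_ge_square_7k:
  fixes k :: nat
  assumes "k \<ge> 3"
  shows "(real k - 1) * (8 * real k^2 - 4 * real k + 1) \<ge> (7 * real k - 10)^2"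
proof -
  define t where "t = real k"
  have e: "(t - 1) * (8 * t^2 - 4 * t + 1) - (7 * t - 10)^2 = 8 * t^3 - 61 * t^2 + 145 * t - 101"
    by (simp add: algebra_simps power2_eq_square power3_eq_cube)
  have "8 * t^3 - 61 * t^2 + 145 * t - 101 \<ge> 0"
  proof (cases "k \<ge> 8")
    case True
    then have T: "t \<ge> 8" unfolding t_def by simp
    have "t^3 = t * t^2" by (simp add: power3_eq_cube power2_eq_square)
    then have "8 * t^3 \<ge> 64 * t^2" using T by (simp add: mult_right_mono)
    moreover have "t^2 \<ge> 0" by simp
    ultimately show ?thesis using T by linarith
  next
    case False
    then have "k = 3 \<or> k = 4 \<or> k = 5 \<or> k = 6 \<or> k = 7" using assms by linarith
    then show ?thesis unfolding t_def by auto
  qed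
  then show ?thesis using e unfolding t_def by linarith
qed

lemma cubic_gt_square_3k:
  fixes k :: nat
  assumes "k \<ge> 2"
  shows "(real k - 1) * (8 * real k^2 - 4 * real k + 1) > (3 * real k - 2)^2"
proof -
  define t where "t = real k"
  have e: "(t - 1) * (8 * t^2 - 4 * t + 1) - (3 * t - 2)^2 = 8 * t^3 - 21 * t^2 + 17 * t - 5"
    by (simp add: algebra_simps power2_eq_square power3_eq_cube)
  have "8 * t^3 - 21 * t^2 + 17 * t - 5 > 0"
  proof (cases "k \<ge> 3")
    case True
    then have T: "t \<ge> 3" unfolding t_def by simp
    have "t^3 = t * t^2" by (simp add: power3_eq_cube power2_eq_square)
    then have "8 * t^3 \<ge> 24 * t^2" using T by (simp add: mult_right_mono)
    moreover have "t^2 \<ge> 0" by simp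
    ultimately show ?thesis using T by linarith
  next
    case False
    then have "k = 2" using assms by linarith
    then show ?thesis unfolding t_def by simp
  qed
  then show ?thesis using e unfolding t_def by linarith
qed

lemma order_bound_real:
  assumes k: "k \<ge> 1" and n: "n \<ge> 8 * k^2 - 3 * k"
  shows "real n \<ge> 8 * real k^2 - 3 * real k" and "n \<ge> k"
proof -
  have "k \<le> k * k" by (rule le_square)
  then have le: "3 * k \<le> 8 * k^2" by (simp add: power2_eq_square)
  have "real (8 * k^2 - 3 * k) = 8 * real k^2 - 3 * real k" using le by (simp add: of_nat_diff)
  then show rn: "real n \<ge> 8 * real k^2 - 3 * real k" using n by (metis of_nat_le_iff)
  have "real k \<le> real k * real k" using \<open>k \<le> k * k\<close> by (metis of_nat_le_iff of_nat_mult)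
  then have "real n \<ge> real k" using rn by (simp add: power2_eq_square)
  then show "n \<ge> k" by simp
qed

lemma large_root_bounds:
  fixes r :: real
  assumes k: "k \<ge> 2" and n: "n \<ge> 8 * k^2 - 3 * k" and r0: "r \<ge> 0"
    and low: "r^2 - (real k - 2) * r \<ge> real (k-1) * real (n-(k-1))"
  shows "r > 3 * real k - 2" and "k \<ge> 3 \<Longrightarrow> r \<ge> 7 * real k - 10"
proof -
  have rn: "real n \<ge> 8 * real k^2 - 3 * real k" and nk: "n \<ge> k" using order_bound_real[of k n] k n by auto
  have e: "real (k-1) * real (n-(k-1)) = (real k - 1) * (real n - real k + 1)"
    using k nk by (simp add: of_nat_diff)
  have "(real k - 2) * r \<ge> 0" using k r0 by simp
  then have r2: "r^2 \<ge> (real k - 1) * (real n - real k + 1)" using low e by linarith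
  have "(real k - 1) * (real n - real k + 1) \<ge> (real k - 1) * (8 * real k^2 - 4 * real k + 1)"
    using rn k by (intro mult_left_mono) auto
  then have r2': "r^2 \<ge> (real k - 1) * (8 * real k^2 - 4 * real k + 1)" using r2 by linarith
  have "(3 * real k - 2)^2 < r^2" using cubic_gt_square_3k[OF k] r2' by linarith
  then show "r > 3 * real k - 2" using r0 by (rule power_less_imp_less_base)
  assume k3: "k \<ge> 3"
  have "(7 * real k - 10)^2 \<le> r^2" using cubic_ge_square_7k[OF k3] r2' by linarith
  then show "r \<ge> 7 * real k - 10" using r0 by (rule power2_le_imp_le)
qed

lemma walk_correction_le:
  fixes r S :: real
  assumes k3: "k \<ge> 3" and lk: "l \<le> k - 2" and n: "n \<ge> 8 * k^2 - 3 * k"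
    and r7: "r \<ge> 7 * real k - 10"
    and S0: "S \<ge> 0" and Sb: "S \<le> real n - real l + 6 * (real k - 2) * (3 * real k - 2)"
  shows "S * real l / (r - (3 * real k - 2)) \<le> real n - 2 * real k + 3"
proof -
  define K where "K = real k"
  define N where "N = real n"
  have K3: "K \<ge> 3" and lK: "real l \<le> K - 2" unfolding K_def using k3 lk by auto
  have rn: "N \<ge> 8 * K^2 - 3 * K" unfolding N_def K_def using order_bound_real(1)[OF _ n] k3 by simp
  have KK: "3 * K \<le> K * K" using K3 by (intro mult_right_mono) auto
  have eq: "6 * (K - 2) * (3 * K - 2) = 18 * (K * K) - 48 * K + 24" by (simp add: algebra_simps)
  have "N + 6 * (K - 2) * (3 * K - 2) \<le> 4 * (N - 2 * K + 3)"
    using rn KK K3 unfolding eq power2_eq_square by (smt (verit))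
  moreover have "S \<le> N + 6 * (K - 2) * (3 * K - 2)" using Sb unfolding N_def K_def by simp
  ultimately have "S * real l \<le> (4 * (N - 2 * K + 3)) * (K - 2)"
    using S0 lK K3 by (intro mult_mono) auto
  also have "\<dots> = (N - 2 * K + 3) * (4 * (K - 2))" by (simp add: algebra_simps)
  also have "\<dots> \<le> (N - 2 * K + 3) * (r - (3 * K - 2))"
  proof (rule mult_left_mono)
    show "4 * (K - 2) \<le> r - (3 * K - 2)" using r7 unfolding K_def by simp
    show "0 \<le> N - 2 * K + 3" using rn KK K3 unfolding power2_eq_square by (smt (verit))
  qed
  finally show ?thesis
    using r7 K3 unfolding N_def K_def by (simp add: divide_simps)
qed

lemma degree_count_contradiction:
  fixes r :: real
  assumes k3: "k \<ge> 3" and l1: "1 \<le> l" and lk: "l \<le> k - 2" and n: "n \<ge> 8 * k^2 - 3 * k"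
    and r0: "r > 0"
    and low: "r^2 - (real k - 2) * r \<ge> real (k-1) * real (n-(k-1))"
    and up: "r^2 \<le> (real l - 1) * r + real l * (real n - real l) + (real n - 2 * real k + 3)"
  shows False
proof -
  define K where "K = real k"
  define N where "N = real n"
  define Lr where "Lr = real l"
  have K3: "K \<ge> 3" and L: "Lr \<ge> 1" "Lr \<le> K - 2" unfolding K_def Lr_def using k3 l1 lk by auto
  have "N \<ge> 8 * K^2 - 3 * K" and "n \<ge> k" unfolding N_def K_def using order_bound_real[OF _ n] k3 by auto
  moreover have "3 * K \<le> K * K" using K3 by (intro mult_right_mono) auto
  ultimately have N0: "N - 2 * K + 3 \<ge> 0" using K3 unfolding power2_eq_square by (smt (verit))
  have "real (k-1) * real (n-(k-1)) = (K - 1) * (N - K + 1)"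
    using k3 \<open>n \<ge> k\<close> unfolding K_def N_def by (simp add: of_nat_diff)
  then have low': "r^2 - (K - 2) * r \<ge> (K - 1) * (N - K + 1)" using low unfolding K_def by simp
  have "(K - 1) * (N - K + 1) - Lr * (N - Lr) = (K - 1 - Lr) * (N - K + 1 - Lr)"
    by (simp add: algebra_simps)
  also have "\<dots> \<ge> 1 * (N - K + 1 - Lr)" using L N0 by (intro mult_right_mono) auto
  finally have "(K - 1) * (N - K + 1) - Lr * (N - Lr) \<ge> N - 2 * K + 3" using L by simp
  moreover have "(K - 1 - Lr) * r \<ge> 1 * r" using L r0 by (intro mult_right_mono) auto
  ultimately show False using up low' r0 unfolding K_def N_def Lr_def by (simp add: algebra_simps)
qed

lemma finite_max_entry:
  fixes x :: "'a \<Rightarrow> real"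
  assumes "finite A" "A \<noteq> {}"
  obtains w where "w \<in> A" "\<forall>v\<in>A. x v \<le> x w"
proof -
  have "Max (x ` A) \<in> x ` A" using assms by simp
  then obtain w where "w \<in> A" "x w = Max (x ` A)" by auto
  then show ?thesis using that assms by auto
qed

lemma eigenvalue_le_degree_at_max_entry:
  assumes fin: "finite V" and eig: "eigen_equation V (adj E) r x"
    and v0: "v0 \<in> V" "\<forall>v\<in>V. x v \<le> x v0" "x v0 > 0"
  shows "r \<le> card (neighbours E V v0)"
proof -
  have "r * x v0 = (\<Sum>u\<in>neighbours E V v0. x u)"
    using eig v0(1) sum_adj_eq_sum_neighbours[OF fin] by simp
  also have "\<dots> \<le> card (neighbours E V v0) * x v0"
    by (rule sum_bounded_above) (use v0(2) neighbours_subset[of E V v0] in blast)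
  finally show ?thesis using v0(3) by (rule mult_right_le_imp_le)
qed

lemma sum_neighbours_split:
  assumes "finite V"
  shows "(\<Sum>w\<in>neighbours E V u. x w)
    = (\<Sum>w\<in>neighbours E V u \<inter> L. x w) + (\<Sum>w\<in>neighbours E V u \<inter> (V - L). x w)"
proof -
  have "neighbours E V u - L = neighbours E V u \<inter> (V - L)" using neighbours_subset[of E V u] by blast
  then show ?thesis using sum.Int_Diff[OF finite_neighbours[OF assms, of E u], of x L] by simp
qed

text \<open>An entry on the low-degree part R is at most r times itself, bounded through its at most
  d neighbours in R and |V - R| neighbours outside.\<close>

lemma eigenvector_entry_bound_low_degree:
  fixes d :: nat and X r :: real
  assumes fin: "finite V" and x: "\<And>v. x v \<ge> 0" and eig: "eigen_equation V (adj E) r x"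
    and R: "R \<subseteq> V" and X: "\<forall>v\<in>V. x v \<le> X"
    and deg: "\<forall>u\<in>R. card (neighbours E V u) \<le> d" and dr: "d < r" and u: "u \<in> R"
  shows "x u \<le> card (V - R) * X / (r - d)"
proof -
  obtain w where w: "w \<in> R" "\<forall>v\<in>R. x v \<le> x w"
    using finite_max_entry[of R x] finite_subset[OF R fin] u by blast
  let ?N = "neighbours E V w"
  have "card (?N - R) \<le> card (V - R)" using neighbours_subset[of E V w] fin by (intro card_mono) auto
  moreover have "card (?N \<inter> R) \<le> d"
    using card_mono[OF finite_neighbours[OF fin, of E w], of "?N \<inter> R"] deg w(1) by auto
  moreover have "X \<ge> 0" using X x[of u] u R by force
  ultimately have bounds: "card (?N - R) * X \<le> card (V - R) * X" "card (?N \<inter> R) * x w \<le> d * x w"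
    using x[of w] by (simp_all add: mult_right_mono)
  have "r * x w = (\<Sum>v\<in>?N - R. x v) + (\<Sum>v\<in>?N \<inter> R. x v)"
    using eig w(1) R sum_adj_eq_sum_neighbours[OF fin]
      sum.Int_Diff[OF finite_neighbours[OF fin, of E w], of x R] by auto
  also have "\<dots> \<le> card (?N - R) * X + card (?N \<inter> R) * x w"
    using X w(2) neighbours_subset[of E V w] by (intro add_mono sum_bounded_above) blast+
  also have "\<dots> \<le> card (V - R) * X + d * x w" using bounds by linarith
  finally have "(r - d) * x w \<le> card (V - R) * X" by (simp add: algebra_simps)
  then have "x w \<le> card (V - R) * X / (r - d)" using dr by (simp add: field_simps)
  then show ?thesis using w(2) u by (meson order_trans)
qed

lemma sum_eigenvector_low_part_le:
  fixes r eps X :: real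
  assumes fin: "finite V" and x: "\<And>v. x v \<ge> 0" and eig: "eigen_equation V (adj E) r x"
    and L: "L \<subseteq> V" and X: "\<forall>v\<in>V. x v \<le> X"
    and eps: "\<forall>u\<in>V - L. x u \<le> eps"
  shows "(\<Sum>u\<in>V - L. r * x u)
    \<le> card (V - L) * card L * X + (\<Sum>u\<in>V - L. card (neighbours E V u \<inter> (V - L))) * eps"
proof -
  have "(\<Sum>u\<in>V - L. r * x u) = (\<Sum>u\<in>V - L. (\<Sum>w\<in>neighbours E V u \<inter> L. x w)
      + (\<Sum>w\<in>neighbours E V u \<inter> (V - L). x w))"
    using eig sum_adj_eq_sum_neighbours[OF fin] sum_neighbours_split[OF fin, of x E _ L]
    by (intro sum.cong) auto
  also have "\<dots> \<le> (\<Sum>u\<in>V - L. card L * X + card (neighbours E V u \<inter> (V - L)) * eps)"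
  proof (intro sum_mono add_mono)
    fix u assume u: "u \<in> V - L"
    have "(\<Sum>w\<in>neighbours E V u \<inter> L. x w) \<le> card (neighbours E V u \<inter> L) * X"
      by (rule sum_bounded_above) (use X L in blast)
    moreover have "card (neighbours E V u \<inter> L) * X \<le> card L * X"
      using card_mono[OF finite_subset[OF L fin], of "neighbours E V u \<inter> L"] X x[of u] u
      by (intro mult_right_mono) (auto intro: order_trans)
    ultimately show "(\<Sum>w\<in>neighbours E V u \<inter> L. x w) \<le> card L * X" by linarith
    show "(\<Sum>w\<in>neighbours E V u \<inter> (V - L). x w) \<le> card (neighbours E V u \<inter> (V - L)) * eps"
      by (rule sum_bounded_above) (use eps in blast)
  qed
  finally show ?thesis by (simp add: sum.distrib sum_distrib_right)
qed

text \<open>Counting walks of length two from a vertex v0 of L that maximises x: the first step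
  goes to L or to R = V - L, and from R a second step goes to L or stays in R.\<close>

lemma eigenvalue_sq_bound:
  fixes r eps :: real
  assumes fin: "finite V" and x: "\<And>v. x v \<ge> 0" and eig: "eigen_equation V (adj E) r x"
    and r: "r \<ge> 0" and simple: "\<forall>e\<in>E. card e = 2"
    and L: "L \<subseteq> V" and v0: "v0 \<in> L" "\<forall>v\<in>V. x v \<le> x v0"
    and eps: "\<forall>u\<in>V - L. x u \<le> eps"
  shows "r * r * x v0 \<le> ((real (card L) - 1) * r + card (V - L) * card L) * x v0
           + (\<Sum>u\<in>V - L. card (neighbours E V u \<inter> (V - L))) * eps"
proof -
  have finL: "finite L" using finite_subset[OF L fin] .
  have "card (neighbours E V v0 \<inter> L) \<le> card (L - {v0})"
    using not_in_neighbours_self[OF simple] finL by (intro card_mono) auto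
  moreover have "card L \<ge> 1" using v0(1) finL card_0_eq by fastforce
  ultimately have "real (card (neighbours E V v0 \<inter> L)) \<le> real (card L) - 1"
    using v0(1) finL by (simp add: card_Diff_singleton of_nat_diff)
  then have "card (neighbours E V v0 \<inter> L) * x v0 \<le> (real (card L) - 1) * x v0"
    using x[of v0] by (rule mult_right_mono)
  moreover have "(\<Sum>u\<in>neighbours E V v0 \<inter> L. x u) \<le> card (neighbours E V v0 \<inter> L) * x v0"
    by (rule sum_bounded_above) (use v0(2) L in blast)
  ultimately have "(\<Sum>u\<in>neighbours E V v0 \<inter> L. x u) \<le> (real (card L) - 1) * x v0" by linarith
  from mult_left_mono[OF this r]
  have first: "r * (\<Sum>u\<in>neighbours E V v0 \<inter> L. x u) \<le> (real (card L) - 1) * r * x v0"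
    by (simp add: algebra_simps)
  have "r * r * x v0 = r * (\<Sum>u\<in>neighbours E V v0. x u)"
    using eig v0(1) L sum_adj_eq_sum_neighbours[OF fin] by auto
  also have "\<dots> = r * (\<Sum>u\<in>neighbours E V v0 \<inter> L. x u) + (\<Sum>u\<in>neighbours E V v0 \<inter> (V - L). r * x u)"
    unfolding sum_neighbours_split[OF fin, of x E v0 L] by (simp add: algebra_simps sum_distrib_left)
  also have "(\<Sum>u\<in>neighbours E V v0 \<inter> (V - L). r * x u) \<le> (\<Sum>u\<in>V - L. r * x u)"
    using x r fin by (intro sum_mono2) auto
  finally have "r * r * x v0 \<le> (real (card L) - 1) * r * x v0 + card (V - L) * card L * x v0
      + (\<Sum>u\<in>V - L. card (neighbours E V u \<inter> (V - L))) * eps"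
    using first sum_eigenvector_low_part_le[OF fin x eig L v0(2) eps] by linarith
  then show ?thesis by (simp only: distrib_right)
qed

lemma max_entry_pos:
  assumes "finite V" "\<And>v. x v \<ge> 0" "sq_norm V x = 1" "v0 \<in> V" "\<forall>v\<in>V. x v \<le> x v0"
  shows "x v0 > 0"
proof (rule ccontr)
  assume "\<not> x v0 > 0"
  then have "\<forall>v\<in>V. x v = 0" using assms(2,5) by (meson order.antisym not_less order_trans)
  then have "sq_norm V x = 0" using sq_norm_eq_0_iff[OF assms(1), of x] by simp
  then show False using assms(3) by simp
qed

lemma eigenvalue_sq_bound_low_degree:
  fixes d :: nat and r :: real
  assumes fin: "finite V" and simple: "\<forall>e\<in>E. card e = 2"
    and x: "\<And>v. x v \<ge> 0" and eig: "eigen_equation V (adj E) r x"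
    and L: "L \<subseteq> V" and v0: "v0 \<in> L" "\<forall>v\<in>V. x v \<le> x v0" "x v0 > 0"
    and deg: "\<forall>u\<in>V - L. card (neighbours E V u) \<le> d" and dr: "d < r"
  shows "r^2 \<le> (real (card L) - 1) * r + card L * card (V - L)
           + (\<Sum>u\<in>V - L. card (neighbours E V u \<inter> (V - L))) * card L / (r - d)"
proof -
  have "V - (V - L) = L" using L by auto
  then have "\<forall>u\<in>V - L. x u \<le> card L * x v0 / (r - d)"
    using eigenvector_entry_bound_low_degree[OF fin x eig _ v0(2) deg dr] by auto
  from eigenvalue_sq_bound[OF fin x eig _ simple L v0(1,2) this] dr
  have "r * r * x v0 \<le> ((real (card L) - 1) * r + card L * card (V - L)
      + (\<Sum>u\<in>V - L. card (neighbours E V u \<inter> (V - L))) * card L / (r - d)) * x v0"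
    by (simp add: algebra_simps)
  then show ?thesis unfolding power2_eq_square using v0(3) by (rule mult_right_le_imp_le)
qed

lemma sum_card_neighbours_low_part_le:
  assumes fin: "finite V" and simple: "\<forall>e\<in>E. card e = 2" and n: "card V = n"
    and L: "L = {v\<in>V. 3 * k \<le> card (neighbours E V v) + 1}" and l: "1 \<le> card L" "card L \<le> k - 2"
    and no: "\<not> (\<exists>f. kP3_embedding E (V - L) (k - card L) f)"
  shows "real (\<Sum>u\<in>V - L. card (neighbours E V u \<inter> (V - L)))
    \<le> real n - real (card L) + 6 * (real k - 2) * (3 * real k - 2)"
proof -
  have LV: "L \<subseteq> V" using L by auto
  have "(\<Sum>u\<in>V - L. card (neighbours E V u \<inter> (V - L)))
      \<le> card (V - L) + 6 * (k - card L - 1) * (3 * k - 2)"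
    using L by (intro sum_card_neighbours_le_if_no_kP3[OF fin simple _ _ no]) auto
  also have "\<dots> \<le> (n - card L) + 6 * (k - 2) * (3 * k - 2)"
  proof -
    have "k - card L - 1 \<le> k - 2" using l by simp
    then have "6 * (k - card L - 1) * (3 * k - 2) \<le> 6 * (k - 2) * (3 * k - 2)" by (intro mult_le_mono1) simp
    then show ?thesis using card_Diff_subset[OF finite_subset[OF LV fin] LV] n by simp
  qed
  finally have "real (\<Sum>u\<in>V - L. card (neighbours E V u \<inter> (V - L)))
      \<le> real ((n - card L) + 6 * (k - 2) * (3 * k - 2))"
    by (simp only: of_nat_le_iff)
  also have "\<dots> = real n - real (card L) + 6 * (real k - 2) * (3 * real k - 2)"
    using l card_mono[OF fin LV] n by (simp add: of_nat_diff)
  finally show ?thesis .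
qed

text \<open>If fewer than k - 1 vertices have high degree, the Perron vector peaks on one of them, and
  counting walks of length two from there bounds rho(G)^2 below the quadratic that rho(F_{n,k})
  satisfies.\<close>

lemma spectral_radius_lt_F_if_few_high_degree:
  assumes sg: "simple_graph V E" and n: "card V = n" and k: "k \<ge> 2"
    and nbig: "n \<ge> 8 * k^2 - 3 * k"
    and L: "L = {v\<in>V. 3 * k \<le> card (neighbours E V v) + 1}" and lk: "card L \<le> k - 2"
    and no: "\<not> (\<exists>f. kP3_embedding E (V - L) (k - card L) f)"
  shows "spectral_radius V E < spectral_radius (F_verts n) (F_edges n k)"
proof (rule ccontr)
  define r where "r = spectral_radius V E"
  assume "\<not> ?thesis"
  then have rF: "spectral_radius (F_verts n) (F_edges n k) \<le> r" unfolding r_def by simp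
  have fin: "finite V" and simple: "\<forall>e\<in>E. card e = 2" using sg unfolding simple_graph_def by auto
  have nk: "k \<le> n" using order_bound_real(2)[OF _ nbig] k by simp
  have r0: "r \<ge> 0" using spectral_radius_F_ge_1[OF k nk] rF by simp
  have low: "r^2 - (real k - 2) * r \<ge> real (k-1) * real (n-(k-1))"
    by (rule spectral_radius_F_lower_bound[OF k nk rF])
  have r3: "r > 3 * real k - 2" by (rule large_root_bounds(1)[OF k nbig r0 low])
  have ne: "V \<noteq> {}" using n nk k by auto
  obtain x where x: "\<And>v. x v \<ge> 0" "sq_norm V x = 1" "eigen_equation V (adj E) r x"
    unfolding r_def by (rule Perron_vector[OF fin ne]) blast
  obtain v0 where v0: "v0 \<in> V" "\<forall>v\<in>V. x v \<le> x v0" using finite_max_entry[OF fin ne] by blast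
  have X: "x v0 > 0" by (rule max_entry_pos[OF fin x(1,2) v0])
  have "v0 \<in> L"
  proof (rule ccontr)
    assume "v0 \<notin> L"
    then have "card (neighbours E V v0) \<le> 3 * k - 2" using v0(1) L by auto
    then show False using eigenvalue_le_degree_at_max_entry[OF fin x(3) v0 X] r3 k by linarith
  qed
  then have l1: "card L \<ge> 1" using fin L by (auto simp: Suc_le_eq card_gt_0_iff)
  then have k3: "k \<ge> 3" using lk by linarith
  have "\<forall>u\<in>V - L. card (neighbours E V u) \<le> 3 * k - 2" and "real (3 * k - 2) < r"
    using L r3 k by (auto simp: of_nat_diff)
  from eigenvalue_sq_bound_low_degree[OF fin simple x(1,3) _ \<open>v0 \<in> L\<close> v0(2) X this] L
  have up: "r^2 \<le> (real (card L) - 1) * r + card L * card (V - L)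
      + (\<Sum>u\<in>V - L. card (neighbours E V u \<inter> (V - L))) * card L / (r - (3 * real k - 2))"
    using k by (auto simp: of_nat_diff)
  have card_R: "real (card (V - L)) = real n - real (card L)"
    using card_Diff_subset[of L V] card_mono[OF fin, of L] fin n L by (auto simp: of_nat_diff)
  have r7: "r \<ge> 7 * real k - 10" by (rule large_root_bounds(2)[OF k nbig r0 low k3])
  have correction: "real (\<Sum>u\<in>V - L. card (neighbours E V u \<inter> (V - L))) * card L / (r - (3 * real k - 2))
      \<le> real n - 2 * real k + 3"
    by (rule walk_correction_le[OF k3 lk nbig r7 of_nat_0_le_iff
          sum_card_neighbours_low_part_le[OF fin simple n L l1 lk no]])
  have "r^2 \<le> (real (card L) - 1) * r + card L * (real n - card L) + (real n - 2 * real k + 3)"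
    using up card_R correction by simp
  then show False using degree_count_contradiction[OF k3 l1 lk nbig _ low] r3 k by simp
qed

theorem mainTheorem5:
  fixes V :: "'a set" and E :: "'a set set" and n k :: nat
  assumes "simple_graph V E"
    and "card V = n"
    and "k \<ge> 2"
    and "n \<ge> 8 * k^2 - 3 * k"
    and "\<not> contains_subgraph V E (kP3_verts k) (kP3_edges k)"
  shows "spectral_radius V E \<le> spectral_radius (F_verts n) (F_edges n k) \<and>
         (spectral_radius V E = spectral_radius (F_verts n) (F_edges n k) \<longleftrightarrow>
          graph_iso V E (F_verts n) (F_edges n k))"
proof -
  have fin: "finite V" and simple: "\<forall>e\<in>E. card e = 2"
    using assms(1) unfolding simple_graph_def by auto
  have no: "\<not> (\<exists>f. kP3_embedding E V k f)" using assms(5) by (simp add: contains_kP3_iff)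
  define L where "L = {v\<in>V. 3 * k \<le> card (neighbours E V v) + 1}"
  have "card L < k" unfolding L_def by (rule high_degree_card_lt[OF fin simple no])
  have no_low: "\<not> (\<exists>f. kP3_embedding E (V - L) (k - card L) f)"
    by (rule no_kP3_in_low_degree_part[OF fin simple no L_def])
  show ?thesis
  proof (cases "card L = k - 1")
    case True
    then have "k - card L = 1" using assms(3) by simp
    have "k \<le> n" using order_bound_real(2)[OF _ assms(4)] assms(3) by simp
    moreover have "L \<subseteq> V" unfolding L_def by blast
    moreover have "\<forall>u\<in>V - L. \<forall>a\<in>V - L. \<forall>c\<in>V - L. {u,a} \<in> E \<longrightarrow> {u,c} \<in> E \<longrightarrow> a = c"
      using degree_le_1_if_no_P3[OF simple] no_low \<open>k - card L = 1\<close> by auto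
    ultimately show ?thesis by (rule spectral_radius_le_F_if_matching[OF assms(1-3) _ _ True])
  next
    case False
    then have "spectral_radius V E < spectral_radius (F_verts n) (F_edges n k)"
      using spectral_radius_lt_F_if_few_high_degree[OF assms(1-4) L_def _ no_low] \<open>card L < k\<close>
      by simp
    then show ?thesis using graph_iso_spectral_radius_eq[of V E "F_verts n" "F_edges n k"] by auto
  qed
qed

end
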